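(* Let $L$ be a finite-dimensional nilpotent Lie superalgebra over $\mathbb{F}$ with $\dim L=(k\mid l)$ and $\dim L'=(r\mid s)$ where $r+s=1$. Then $L$ is capable if and only if either $L\cong H(1,0)\oplus A(k-3\mid l)$ or $L\cong H_{1}\oplus A(k-1\mid l-2)$.
   Context: All algebras are over a field $\mathbb{F}$ of characteristic $\neq 2,3$. A Lie superalgebra is $L=L_{\bar 0}\oplus L_{\bar 1}$ with a graded, graded skew-symmetric bracket satisfying the graded Jacobi identity; $\dim L=(m\mid n)$ means $\dim L_{\bar 0}=m$, $\dim L_{\bar 1}=n$. $L'=[L,L]$, $Z(L)$ is the center. A Lie superalgebra $L$ is capable if $L\cong H/Z(H)$ for some Lie superalgebra $H$. $A(m\mid n)$ denotes the abelian Lie superalgebra of dimension $(m\mid n)$. $H(m,n)$ ($m+n\ge 1$) is the Lie superalgebra with even basis $x_1,\dots,x_{2m},z$, odd basis $y_1,\dots,y_n$, and nonzero brackets $[x_i,x_{m+i}]=z$ ($1\le i\le m$), $[y_j,y_j]=z$ ($1\le j\le n$); it has dimension $(2m+1\mid n)$. $H_m$ ($m\ge1$) is the Lie superalgebra with even basis $x_1,\dots,x_m$, odd basis $y_1,\dots,y_m,z$, and nonzero brackets $[x_j,y_j]=z$ ($1\le j\le m$); it has dimension $(m\mid m+1)$. $\oplus$ denotes direct sum of Lie superalgebras. *)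

theory Defs
  imports Complex_Main "HOL-Library.Product_Plus" "HOL-Library.Function_Algebras"
begin

text \<open>A Lie superalgebra is given by an ambient vector space (type 'v with addition
and a scalar multiplication sm over the field 'f), a carrier subspace which is the
direct sum of the even part ev and the odd part od, and a bracket br.\<close>

record ('f, 'v) lsa =
  car :: "'v set"
  ev :: "'v set"
  od :: "'v set"
  sm :: "'f \<Rightarrow> 'v \<Rightarrow> 'v"
  br :: "'v \<Rightarrow> 'v \<Rightarrow> 'v"

definition part :: "('f, 'v) lsa \<Rightarrow> nat \<Rightarrow> 'v set" where
  "part L d = (if d = 0 then ev L else od L)"

definition sgnmul :: "nat \<Rightarrow> nat \<Rightarrow> 'v::ab_group_add \<Rightarrow> 'v" where
  "sgnmul i j v = (if odd (i * j) then - v else v)"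

definition is_lsa :: "('f::field, 'v::ab_group_add) lsa \<Rightarrow> bool" where
  "is_lsa L \<longleftrightarrow>
     vector_space (sm L) \<and>
     module.subspace (sm L) (ev L) \<and> module.subspace (sm L) (od L) \<and>
     ev L \<inter> od L = {0} \<and>
     car L = {a + b | a b. a \<in> ev L \<and> b \<in> od L} \<and>
     (\<forall>x\<in>car L. \<forall>y\<in>car L. br L x y \<in> car L) \<and>
     (\<forall>x\<in>car L. \<forall>y\<in>car L. \<forall>z\<in>car L.
        br L (x + y) z = br L x z + br L y z \<and> br L z (x + y) = br L z x + br L z y) \<and>
     (\<forall>c. \<forall>x\<in>car L. \<forall>y\<in>car L.
        br L (sm L c x) y = sm L c (br L x y) \<and> br L x (sm L c y) = sm L c (br L x y)) \<and>
     (\<forall>i<2. \<forall>j<2. \<forall>x\<in>part L i. \<forall>y\<in>part L j. br L x y \<in> part L ((i + j) mod 2)) \<and>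
     (\<forall>i<2. \<forall>j<2. \<forall>x\<in>part L i. \<forall>y\<in>part L j.
        br L x y = - sgnmul i j (br L y x)) \<and>
     (\<forall>i<2. \<forall>j<2. \<forall>k<2. \<forall>x\<in>part L i. \<forall>y\<in>part L j. \<forall>z\<in>part L k.
        br L x (br L y z) = br L (br L x y) z + sgnmul i j (br L y (br L x z)))"

definition fin_dim :: "('f::field, 'v::ab_group_add) lsa \<Rightarrow> bool" where
  "fin_dim L \<longleftrightarrow> (\<exists>B. finite B \<and> module.span (sm L) B = car L)"

text \<open>Dimensions of the even and odd parts of a subset S (for graded subspaces S).\<close>
definition dim_ev :: "('f::field, 'v::ab_group_add) lsa \<Rightarrow> 'v set \<Rightarrow> nat" where
  "dim_ev L S = vector_space.dim (sm L) (S \<inter> ev L)"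
definition dim_od :: "('f::field, 'v::ab_group_add) lsa \<Rightarrow> 'v set \<Rightarrow> nat" where
  "dim_od L S = vector_space.dim (sm L) (S \<inter> od L)"

definition brspan :: "('f::field, 'v::ab_group_add) lsa \<Rightarrow> 'v set \<Rightarrow> 'v set \<Rightarrow> 'v set" where
  "brspan L A B = module.span (sm L) {br L a b | a b. a \<in> A \<and> b \<in> B}"

definition derived :: "('f::field, 'v::ab_group_add) lsa \<Rightarrow> 'v set" where
  "derived L = brspan L (car L) (car L)"

fun lcs :: "('f::field, 'v::ab_group_add) lsa \<Rightarrow> nat \<Rightarrow> 'v set" where
  "lcs L 0 = car L"
| "lcs L (Suc n) = brspan L (lcs L n) (car L)"

definition nilpotent :: "('f::field, 'v::ab_group_add) lsa \<Rightarrow> bool" where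
  "nilpotent L \<longleftrightarrow> (\<exists>n. lcs L n = {0})"

definition center :: "('f, 'v::ab_group_add) lsa \<Rightarrow> 'v set" where
  "center L = {z \<in> car L. \<forall>x\<in>car L. br L z x = 0}"

definition lsa_hom :: "('f, 'v::ab_group_add) lsa \<Rightarrow> ('f, 'w::ab_group_add) lsa \<Rightarrow> ('v \<Rightarrow> 'w) \<Rightarrow> bool" where
  "lsa_hom L M f \<longleftrightarrow>
     (\<forall>x\<in>car L. f x \<in> car M) \<and>
     (\<forall>x\<in>car L. \<forall>y\<in>car L. f (x + y) = f x + f y) \<and>
     (\<forall>c. \<forall>x\<in>car L. f (sm L c x) = sm M c (f x)) \<and>
     f ` ev L \<subseteq> ev M \<and> f ` od L \<subseteq> od M \<and>
     (\<forall>x\<in>car L. \<forall>y\<in>car L. f (br L x y) = br M (f x) (f y))"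

definition lsa_iso :: "('f, 'v::ab_group_add) lsa \<Rightarrow> ('f, 'w::ab_group_add) lsa \<Rightarrow> ('v \<Rightarrow> 'w) \<Rightarrow> bool" where
  "lsa_iso L M f \<longleftrightarrow> lsa_hom L M f \<and> bij_betw f (car L) (car M)"

definition isomorphic :: "('f, 'v::ab_group_add) lsa \<Rightarrow> ('f, 'w::ab_group_add) lsa \<Rightarrow> bool" where
  "isomorphic L M \<longleftrightarrow> (\<exists>f. lsa_iso L M f)"

text \<open>H is a Lie superalgebra and f : H \<rightarrow> L is a surjective homomorphism with kernel Z(H),
  i.e. L \<cong> H/Z(H).\<close>
definition central_quot :: "('f::field, 'h::ab_group_add) lsa \<Rightarrow> ('f, 'v::ab_group_add) lsa \<Rightarrow> ('h \<Rightarrow> 'v) \<Rightarrow> bool" where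
  "central_quot H L f \<longleftrightarrow> is_lsa H \<and> lsa_hom H L f \<and> f ` car H = car L \<and>
      {x \<in> car H. f x = 0} = center H"

text \<open>L is capable, witnessed by some H whose ambient vector space is of type 'h.\<close>
definition capable_wrt :: "'h::ab_group_add itself \<Rightarrow> ('f::field, 'v::ab_group_add) lsa \<Rightarrow> bool" where
  "capable_wrt _ L \<longleftrightarrow> (\<exists>(H :: ('f, 'h) lsa) f. central_quot H L f)"

section \<open>Concrete Lie superalgebras, realised in nat \<Rightarrow> 'f (basis vector e_i = indicator of i)\<close>

definition fsm :: "'f::field \<Rightarrow> (nat \<Rightarrow> 'f) \<Rightarrow> nat \<Rightarrow> 'f" where
  "fsm c v = (\<lambda>j. c * v j)"

definition supp_in :: "nat \<Rightarrow> nat \<Rightarrow> (nat \<Rightarrow> 'f::zero) set" where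
  "supp_in a b = {v. \<forall>j. (j < a \<or> b \<le> j) \<longrightarrow> v j = 0}"

text \<open>H(m,n): x_i = e_(i-1) (1 \<le> i \<le> 2m), z = e_(2m), y_j = e_(2m+j) (1 \<le> j \<le> n);
  nonzero brackets [x_i, x_(m+i)] = z, [y_j, y_j] = z (extended bilinearly).\<close>
definition Heis :: "nat \<Rightarrow> nat \<Rightarrow> ('f::field, nat \<Rightarrow> 'f) lsa" where
  "Heis m n = \<lparr> car = supp_in 0 (2*m + n + 1),
                ev = supp_in 0 (2*m + 1),
                od = supp_in (2*m + 1) (2*m + n + 1),
                sm = fsm,
                br = (\<lambda>u v j. if j = 2*m then
                         (\<Sum>i<m. u i * v (m + i) - u (m + i) * v i)
                         + (\<Sum>k\<in>{1..n}. u (2*m + k) * v (2*m + k))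
                       else 0) \<rparr>"

text \<open>H_m: x_j = e_(j-1), y_j = e_(m+j-1) (1 \<le> j \<le> m), z = e_(2m);
  nonzero brackets [x_j, y_j] = z (and hence [y_j, x_j] = -z).\<close>
definition Hodd :: "nat \<Rightarrow> ('f::field, nat \<Rightarrow> 'f) lsa" where
  "Hodd m = \<lparr> car = supp_in 0 (2*m + 1),
              ev = supp_in 0 m,
              od = supp_in m (2*m + 1),
              sm = fsm,
              br = (\<lambda>u v j. if j = 2*m then
                       (\<Sum>i<m. u i * v (m + i) - u (m + i) * v i)
                     else 0) \<rparr>"

definition Aab :: "nat \<Rightarrow> nat \<Rightarrow> ('f::field, nat \<Rightarrow> 'f) lsa" where
  "Aab m n = \<lparr> car = supp_in 0 (m + n), ev = supp_in 0 m, od = supp_in m (m + n),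
               sm = fsm, br = (\<lambda>u v. 0) \<rparr>"

definition dsum :: "('f, 'v::ab_group_add) lsa \<Rightarrow> ('f, 'w::ab_group_add) lsa \<Rightarrow> ('f, 'v \<times> 'w) lsa" where
  "dsum L M = \<lparr> car = car L \<times> car M, ev = ev L \<times> ev M, od = od L \<times> od M,
                sm = (\<lambda>c (x, y). (sm L c x, sm M c y)),
                br = (\<lambda>(x1, y1) (x2, y2). (br L x1 x2, br M y1 y2)) \<rparr>"

end

theory Submission
  imports Defs
begin

text \<open>Suppose \<open>L \<cong> H/Z(H)\<close> and \<open>L'\<close> is spanned by one element z. Choose homogeneous \<open>x\<^sub>1\<close> (even) and
  \<open>x\<^sub>2\<close> with \<open>[x\<^sub>1, x\<^sub>2] = z\<close>; nilpotency makes z central. Lifting to H, where modulo the centre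
  every bracket is a multiple of a lift of z, the Jacobi identity shows that a second homogeneous pair
  commuting with \<open>x\<^sub>1, x\<^sub>2\<close> must have zero bracket, and (as \<open>char \<noteq> 3\<close>) that no odd square
  \<open>[y, y]\<close> can span \<open>L'\<close>. Hence the centraliser of \<open>x\<^sub>1, x\<^sub>2\<close> is the centre,
  \<open>L = span{x\<^sub>1, x\<^sub>2} \<oplus> Z(L)\<close>, and a homogeneous basis of \<open>Z(L)\<close> through z identifies L with
  \<open>H(1,0) \<oplus> A\<close> or \<open>H\<^sub>1 \<oplus> A\<close> according to the parity of \<open>x\<^sub>2\<close>. Conversely, both algebras
  are central quotients of an explicit extension in which one even basis vector acts on the others
  by a nilpotent shift.\<close>

text \<open>Weaker than \<open>is_lsa\<close> and easy to check for the concrete models, yet enough to invert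
  bijective homomorphisms.\<close>

definition graded_carrier :: "('f::field, 'v::ab_group_add) lsa \<Rightarrow> bool" where
  "graded_carrier L \<longleftrightarrow> 0 \<in> ev L \<and> 0 \<in> od L \<and> ev L \<inter> od L = {0} \<and>
     car L = {a + b | a b. a \<in> ev L \<and> b \<in> od L} \<and>
     (\<forall>x\<in>ev L. \<forall>y\<in>ev L. x - y \<in> ev L) \<and> (\<forall>x\<in>od L. \<forall>y\<in>od L. x - y \<in> od L) \<and>
     (\<forall>x\<in>car L. \<forall>y\<in>car L. x + y \<in> car L \<and> br L x y \<in> car L) \<and>
     (\<forall>c. \<forall>x\<in>car L. sm L c x \<in> car L)"

lemma graded_carrierD:
  assumes "graded_carrier L"
  shows graded_carrier_ev_od: "ev L \<inter> od L = {0}"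
    and graded_carrier_car: "car L = {a + b | a b. a \<in> ev L \<and> b \<in> od L}"
    and graded_carrier_ev_diff: "x \<in> ev L \<Longrightarrow> y \<in> ev L \<Longrightarrow> x - y \<in> ev L"
    and graded_carrier_od_diff: "x \<in> od L \<Longrightarrow> y \<in> od L \<Longrightarrow> x - y \<in> od L"
    and graded_carrier_add: "x \<in> car L \<Longrightarrow> y \<in> car L \<Longrightarrow> x + y \<in> car L"
    and graded_carrier_br: "x \<in> car L \<Longrightarrow> y \<in> car L \<Longrightarrow> br L x y \<in> car L"
    and graded_carrier_sm: "x \<in> car L \<Longrightarrow> sm L c x \<in> car L"
    and graded_carrier_ev_car: "x \<in> ev L \<Longrightarrow> x \<in> car L"
    and graded_carrier_od_car: "x \<in> od L \<Longrightarrow> x \<in> car L"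
    and graded_carrier_zero: "0 \<in> car L"
    and graded_carrier_ev_zero: "0 \<in> ev L"
    and graded_carrier_od_zero: "0 \<in> od L"
proof -
  note D = assms[unfolded graded_carrier_def]
  show "ev L \<inter> od L = {0}" "car L = {a + b | a b. a \<in> ev L \<and> b \<in> od L}"
    "x \<in> ev L \<Longrightarrow> y \<in> ev L \<Longrightarrow> x - y \<in> ev L"
    "x \<in> od L \<Longrightarrow> y \<in> od L \<Longrightarrow> x - y \<in> od L"
    "x \<in> car L \<Longrightarrow> y \<in> car L \<Longrightarrow> x + y \<in> car L"
    "x \<in> car L \<Longrightarrow> y \<in> car L \<Longrightarrow> br L x y \<in> car L"
    "x \<in> car L \<Longrightarrow> sm L c x \<in> car L" "0 \<in> ev L" "0 \<in> od L"
    using D by blast+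
  show "x \<in> ev L \<Longrightarrow> x \<in> car L" using D by (metis (mono_tags, lifting) CollectI add_0_right)
  show "x \<in> od L \<Longrightarrow> x \<in> car L" using D by (metis (mono_tags, lifting) CollectI add_0)
  show "0 \<in> car L" using D by (metis (mono_tags, lifting) CollectI add_0)
qed

lemma graded_carrier_decomp_unique:
  assumes L: "graded_carrier L" and "a \<in> ev L" "b \<in> od L" "a' \<in> ev L" "b' \<in> od L"
    and "a + b = a' + b'"
  shows "a = a' \<and> b = b'"
proof -
  have "a - a' = b' - b" using assms(6) by (simp add: algebra_simps)
  moreover have "a - a' \<in> ev L" "b' - b \<in> od L"
    using assms(2-5) graded_carrier_ev_diff[OF L] graded_carrier_od_diff[OF L] by auto
  ultimately have "b' - b = 0" using graded_carrier_ev_od[OF L] by (metis IntI singletonD)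
  thus ?thesis using assms(6) by simp
qed

lemma lsa_homD:
  assumes "lsa_hom L M f"
  shows lsa_hom_car: "x \<in> car L \<Longrightarrow> f x \<in> car M"
    and lsa_hom_add: "x \<in> car L \<Longrightarrow> y \<in> car L \<Longrightarrow> f (x + y) = f x + f y"
    and lsa_hom_sm: "x \<in> car L \<Longrightarrow> f (sm L c x) = sm M c (f x)"
    and lsa_hom_ev: "x \<in> ev L \<Longrightarrow> f x \<in> ev M"
    and lsa_hom_od: "x \<in> od L \<Longrightarrow> f x \<in> od M"
    and lsa_hom_br: "x \<in> car L \<Longrightarrow> y \<in> car L \<Longrightarrow> f (br L x y) = br M (f x) (f y)"
  using assms unfolding lsa_hom_def image_subset_iff by simp_all

lemma lsa_hom_zero: "lsa_hom L M f \<Longrightarrow> graded_carrier L \<Longrightarrow> f 0 = 0"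
  using lsa_hom_add[of L M f 0 0] graded_carrier_zero by fastforce

lemma lsa_hom_comp: "lsa_hom A B f \<Longrightarrow> lsa_hom B C g \<Longrightarrow> lsa_hom A C (g \<circ> f)"
  unfolding lsa_hom_def by (auto simp: image_subset_iff)

lemma lsa_hom_inj_reflects_parity:
  assumes g: "lsa_hom M L g" "inj_on g (car M)" and M: "graded_carrier M" and L: "graded_carrier L"
    and x: "x \<in> car M"
  shows "g x \<in> ev L \<Longrightarrow> x \<in> ev M" "g x \<in> od L \<Longrightarrow> x \<in> od M"
proof -
  obtain a b where ab: "a \<in> ev M" "b \<in> od M" "x = a + b" using x graded_carrier_car[OF M] by blast
  have gab: "g x = g a + g b" "g a \<in> ev L" "g b \<in> od L"
    using ab lsa_hom_add[OF g(1)] lsa_hom_ev[OF g(1)] lsa_hom_od[OF g(1)]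
      graded_carrier_ev_car[OF M] graded_carrier_od_car[OF M] by auto
  have zero: "g y = 0 \<Longrightarrow> y = 0" if "y \<in> car M" for y
    using g(2) that lsa_hom_zero[OF g(1) M] graded_carrier_zero[OF M] by (metis inj_onD)
  show "x \<in> ev M" if "g x \<in> ev L"
  proof -
    have "g b = 0"
      using graded_carrier_decomp_unique[OF L gab(2,3) that graded_carrier_od_zero[OF L]] gab(1) by simp
    hence "b = 0" using zero graded_carrier_od_car[OF M] ab(2) by blast
    thus ?thesis using ab by simp
  qed
  show "x \<in> od M" if "g x \<in> od L"
  proof -
    have "g a = 0"
      using graded_carrier_decomp_unique[OF L gab(2,3) graded_carrier_ev_zero[OF L] that] gab(1) by simp
    hence "a = 0" using zero graded_carrier_ev_car[OF M] ab(1) by blast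
    thus ?thesis using ab by simp
  qed
qed

lemma lsa_iso_inv_into:
  assumes g: "lsa_hom M L g" and bij: "bij_betw g (car M) (car L)"
    and M: "graded_carrier M" and L: "graded_carrier L"
  shows "lsa_iso L M (inv_into (car M) g)"
proof -
  define h where "h = inv_into (car M) g"
  have inj: "inj_on g (car M)" using bij bij_betw_def by blast
  have h_car: "h y \<in> car M" if "y \<in> car L" for y
    using bij that unfolding h_def by (metis bij_betw_def inv_into_into)
  have g_h: "g (h y) = y" if "y \<in> car L" for y
    using bij that unfolding h_def by (meson bij_betw_inv_into_right)
  have h_eqI: "h y = x" if "x \<in> car M" "g x = y" for x y
    using that bij unfolding h_def by (simp add: bij_betw_def inv_into_f_eq)
  have h_ev: "h x \<in> ev M" if "x \<in> ev L" for x
    using lsa_hom_inj_reflects_parity(1)[OF g inj M L h_car] g_h graded_carrier_ev_car[OF L] that by simp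
  have h_od: "h x \<in> od M" if "x \<in> od L" for x
    using lsa_hom_inj_reflects_parity(2)[OF g inj M L h_car] g_h graded_carrier_od_car[OF L] that by simp
  have h_add: "h (x + y) = h x + h y" if "x \<in> car L" "y \<in> car L" for x y
    using that by (intro h_eqI) (simp_all add: graded_carrier_add[OF M] h_car lsa_hom_add[OF g] g_h)
  have h_sm: "h (sm L c x) = sm M c (h x)" if "x \<in> car L" for x c
    using that by (intro h_eqI) (simp_all add: graded_carrier_sm[OF M] h_car lsa_hom_sm[OF g] g_h)
  have h_br: "h (br L x y) = br M (h x) (h y)" if "x \<in> car L" "y \<in> car L" for x y
    using that by (intro h_eqI) (simp_all add: graded_carrier_br[OF M] h_car lsa_hom_br[OF g] g_h)
  have "lsa_hom L M h"
    unfolding lsa_hom_def using h_car h_add h_sm h_ev h_od h_br by (simp add: image_subset_iff)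
  moreover have "bij_betw h (car L) (car M)" unfolding h_def using bij by (rule bij_betw_inv_into)
  ultimately show ?thesis unfolding lsa_iso_def h_def by blast
qed

lemma sgnmul_zero [simp]: "sgnmul i j (0::'a::ab_group_add) = 0"
  by (simp add: sgnmul_def)

locale lie_superalgebra =
  fixes L :: "('f::field, 'v::ab_group_add) lsa"
  assumes lsa: "is_lsa L"
begin

sublocale V: vector_space "sm L"
  using lsa unfolding is_lsa_def by (elim conjE) blast

lemma ev_subspace: "V.subspace (ev L)" and od_subspace: "V.subspace (od L)"
  and ev_od: "ev L \<inter> od L = {0}" and car_eq: "car L = {a + b | a b. a \<in> ev L \<and> b \<in> od L}"
  using lsa by (simp_all add: is_lsa_def)

lemma br_car: "x \<in> car L \<Longrightarrow> y \<in> car L \<Longrightarrow> br L x y \<in> car L"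
  using lsa unfolding is_lsa_def by (elim conjE) blast

lemma br_add_left: "x \<in> car L \<Longrightarrow> y \<in> car L \<Longrightarrow> z \<in> car L \<Longrightarrow> br L (x + y) z = br L x z + br L y z"
  using lsa unfolding is_lsa_def by (elim conjE) blast

lemma br_add_right: "x \<in> car L \<Longrightarrow> y \<in> car L \<Longrightarrow> z \<in> car L \<Longrightarrow> br L z (x + y) = br L z x + br L z y"
  using lsa unfolding is_lsa_def by (elim conjE) blast

lemma br_scale_left: "x \<in> car L \<Longrightarrow> y \<in> car L \<Longrightarrow> br L (sm L c x) y = sm L c (br L x y)"
  using lsa unfolding is_lsa_def by (elim conjE) blast

lemma br_scale_right: "x \<in> car L \<Longrightarrow> y \<in> car L \<Longrightarrow> br L x (sm L c y) = sm L c (br L x y)"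
  using lsa unfolding is_lsa_def by (elim conjE) blast

lemma br_part: "i < 2 \<Longrightarrow> j < 2 \<Longrightarrow> x \<in> part L i \<Longrightarrow> y \<in> part L j \<Longrightarrow> br L x y \<in> part L ((i + j) mod 2)"
  using lsa unfolding is_lsa_def by (elim conjE) blast

lemma br_skew: "i < 2 \<Longrightarrow> j < 2 \<Longrightarrow> x \<in> part L i \<Longrightarrow> y \<in> part L j \<Longrightarrow> br L x y = - sgnmul i j (br L y x)"
  using lsa unfolding is_lsa_def by (elim conjE) blast

lemma br_jacobi: "i < 2 \<Longrightarrow> j < 2 \<Longrightarrow> k < 2 \<Longrightarrow> x \<in> part L i \<Longrightarrow> y \<in> part L j \<Longrightarrow> z \<in> part L k \<Longrightarrow>
    br L x (br L y z) = br L (br L x y) z + sgnmul i j (br L y (br L x z))"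
  using lsa unfolding is_lsa_def by (elim conjE) meson

lemma ev_car: "x \<in> ev L \<Longrightarrow> x \<in> car L"
  using car_eq V.subspace_0[OF od_subspace] by (metis (mono_tags, lifting) CollectI add_0_right)

lemma od_car: "x \<in> od L \<Longrightarrow> x \<in> car L"
  using car_eq V.subspace_0[OF ev_subspace] by (metis (mono_tags, lifting) CollectI add_0)

lemma car_decomp:
  assumes "x \<in> car L"
  obtains a b where "a \<in> ev L" "b \<in> od L" "x = a + b"
  using assms car_eq by blast

lemma part_car: "i < 2 \<Longrightarrow> x \<in> part L i \<Longrightarrow> x \<in> car L"
  by (auto simp: part_def ev_car od_car split: if_splits)

lemma car_subspace: "V.subspace (car L)"
  unfolding V.subspace_def
proof (intro conjI ballI allI)
  show "0 \<in> car L" using ev_car V.subspace_0[OF ev_subspace] by blast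
next
  fix x y assume "x \<in> car L" "y \<in> car L"
  then obtain a b c d where "a \<in> ev L" "b \<in> od L" "x = a + b" "c \<in> ev L" "d \<in> od L" "y = c + d"
    by (metis car_decomp)
  moreover have "x + y = (a + c) + (b + d)" using calculation by (simp add: algebra_simps)
  ultimately show "x + y \<in> car L"
    using car_eq V.subspace_add[OF ev_subspace] V.subspace_add[OF od_subspace] by blast
next
  fix c x assume "x \<in> car L"
  then obtain a b where "a \<in> ev L" "b \<in> od L" "x = a + b" by (rule car_decomp)
  moreover have "sm L c x = sm L c a + sm L c b" using calculation by (simp add: V.scale_right_distrib)
  ultimately show "sm L c x \<in> car L"
    using car_eq V.subspace_scale[OF ev_subspace] V.subspace_scale[OF od_subspace] by blast
qed

lemma car_add: "x \<in> car L \<Longrightarrow> y \<in> car L \<Longrightarrow> x + y \<in> car L"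
  and car_diff: "x \<in> car L \<Longrightarrow> y \<in> car L \<Longrightarrow> x - y \<in> car L"
  and car_scale: "x \<in> car L \<Longrightarrow> sm L c x \<in> car L"
  using V.subspace_add V.subspace_diff V.subspace_scale car_subspace by blast+

lemma graded: "graded_carrier L"
  unfolding graded_carrier_def
  using V.subspace_0[OF ev_subspace] V.subspace_0[OF od_subspace] ev_od car_eq
    V.subspace_diff[OF ev_subspace] V.subspace_diff[OF od_subspace] car_add br_car car_scale
  by simp

lemma homogeneous_sum_zero:
  assumes "a \<in> ev L" "b \<in> od L" "a + b = 0" shows "a = 0" "b = 0"
proof -
  have "a = - b" using assms(3) by (simp add: add_eq_0_iff)
  hence "a \<in> od L" using V.subspace_neg[OF od_subspace assms(2)] by simp
  thus "a = 0" using assms(1) ev_od by blast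
  thus "b = 0" using assms(3) by simp
qed

lemma br_zero_left: "y \<in> car L \<Longrightarrow> br L 0 y = 0"
  using br_scale_left[OF V.subspace_0[OF car_subspace], of y 0] by simp

lemma br_diff_left: "x \<in> car L \<Longrightarrow> y \<in> car L \<Longrightarrow> z \<in> car L \<Longrightarrow> br L (x - y) z = br L x z - br L y z"
  using br_add_left[of "x - y" y z] car_diff by (simp add: algebra_simps)

lemma br_diff_right: "x \<in> car L \<Longrightarrow> y \<in> car L \<Longrightarrow> z \<in> car L \<Longrightarrow> br L z (x - y) = br L z x - br L z y"
  using br_add_right[of "x - y" y z] car_diff by (simp add: algebra_simps)

lemma br_ev_ev: "x \<in> ev L \<Longrightarrow> y \<in> ev L \<Longrightarrow> br L x y \<in> ev L"
  and br_ev_od: "x \<in> ev L \<Longrightarrow> y \<in> od L \<Longrightarrow> br L x y \<in> od L"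
  and br_od_ev: "x \<in> od L \<Longrightarrow> y \<in> ev L \<Longrightarrow> br L x y \<in> od L"
  and br_od_od: "x \<in> od L \<Longrightarrow> y \<in> od L \<Longrightarrow> br L x y \<in> ev L"
  using br_part[of 0 0 x y] br_part[of 0 1 x y] br_part[of 1 0 x y] br_part[of 1 1 x y]
  by (simp_all add: part_def)

lemma br_skew_ev: "x \<in> ev L \<Longrightarrow> y \<in> car L \<Longrightarrow> br L x y = - br L y x"
proof -
  assume x: "x \<in> ev L" and "y \<in> car L"
  then obtain a b where ab: "a \<in> ev L" "b \<in> od L" "y = a + b" by (metis car_decomp)
  have "br L x a = - br L a x" "br L x b = - br L b x"
    using br_skew[of 0 0 x a] br_skew[of 0 1 x b] x ab by (simp_all add: part_def sgnmul_def)
  thus ?thesis using ab x br_add_left br_add_right ev_car od_car by simp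
qed

lemma br_skew_ev': "x \<in> car L \<Longrightarrow> y \<in> ev L \<Longrightarrow> br L x y = - br L y x"
  using br_skew_ev by (metis minus_minus)

lemma br_sym_od: "x \<in> od L \<Longrightarrow> y \<in> od L \<Longrightarrow> br L x y = br L y x"
  using br_skew[of 1 1 x y] by (simp add: part_def sgnmul_def)

lemma br_homogeneous_zero_sym:
  "i < 2 \<Longrightarrow> j < 2 \<Longrightarrow> x \<in> part L i \<Longrightarrow> y \<in> part L j \<Longrightarrow> br L x y = 0 \<longleftrightarrow> br L y x = 0"
  using br_skew[of i j x y] by (auto simp: sgnmul_def split: if_splits)

lemma br_zero_components:
  assumes x: "x \<in> part L i" "i < 2" and v: "a \<in> ev L" "b \<in> od L" "br L (a + b) x = 0"
  shows "br L a x = 0" "br L b x = 0"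
proof -
  have sum: "br L a x + br L b x = 0" using v x br_add_left ev_car od_car part_car by metis
  have "x \<in> ev L \<or> x \<in> od L" using x by (auto simp: part_def split: if_splits)
  thus "br L a x = 0" "br L b x = 0"
    using sum homogeneous_sum_zero[of "br L a x" "br L b x"] homogeneous_sum_zero[of "br L b x" "br L a x"]
      br_ev_ev br_od_ev br_ev_od br_od_od v by (auto simp: add.commute)
qed

lemma centerI:
  assumes "c \<in> car L" "\<And>y. y \<in> ev L \<Longrightarrow> br L c y = 0" "\<And>y. y \<in> od L \<Longrightarrow> br L c y = 0"
  shows "c \<in> center L"
  unfolding center_def
proof (intro CollectI conjI ballI)
  fix y assume "y \<in> car L"
  then obtain p q where "p \<in> ev L" "q \<in> od L" "y = p + q" by (rule car_decomp)
  thus "br L c y = 0" using assms br_add_right ev_car od_car by simp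
qed (use assms in simp)

lemma center_car: "c \<in> center L \<Longrightarrow> c \<in> car L"
  and center_br_left: "c \<in> center L \<Longrightarrow> y \<in> car L \<Longrightarrow> br L c y = 0"
  unfolding center_def by blast+

lemma center_components:
  assumes c: "c \<in> center L" and ab: "a \<in> ev L" "b \<in> od L" "c = a + b"
  shows "a \<in> center L" "b \<in> center L"
proof -
  have "br L a p = 0 \<and> br L b p = 0" if "p \<in> part L i" "i < 2" for p i
    using br_zero_components[OF that ab(1,2)] c ab(3) center_br_left part_car that by auto
  from this[of _ 0] this[of _ 1] show "a \<in> center L" "b \<in> center L"
    using ab ev_car od_car by (auto intro!: centerI simp: part_def)
qed

lemma center_br_right:
  assumes c: "c \<in> center L" and y: "y \<in> car L" shows "br L y c = 0"
proof -
  obtain a b where ab: "a \<in> ev L" "b \<in> od L" "c = a + b"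
    using car_decomp center_car[OF c] by metis
  have "br L y a = 0" using br_skew_ev'[OF y ab(1)] center_components[OF c ab] y center_br_left by simp
  moreover obtain p q where pq: "p \<in> ev L" "q \<in> od L" "y = p + q" using car_decomp[OF y] by metis
  have "br L p b = 0" "br L q b = 0"
    using br_skew_ev[OF pq(1) od_car[OF ab(2)]] br_sym_od[OF pq(2) ab(2)]
      center_components[OF c ab] center_br_left ev_car od_car pq by simp_all
  hence "br L y b = 0" using pq ab br_add_left ev_car od_car by simp
  ultimately show ?thesis using y ab br_add_right ev_car od_car by simp
qed

lemma center_subspace: "V.subspace (center L)"
  unfolding V.subspace_def
proof (intro conjI ballI allI)
  show "0 \<in> center L" unfolding center_def using V.subspace_0[OF car_subspace] br_zero_left by blast
next
  fix x y assume "x \<in> center L" "y \<in> center L"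
  thus "x + y \<in> center L" unfolding center_def using car_add br_add_left by auto
next
  fix c x assume "x \<in> center L"
  thus "sm L c x \<in> center L" unfolding center_def using car_scale br_scale_left by auto
qed

lemma scale_two_zero:
  fixes x :: 'v assumes "(2::'f) \<noteq> 0" "x + x = 0" shows "x = 0"
proof -
  have "sm L 2 x = sm L (1 + 1) x" by simp
  also have "\<dots> = x + x" by (simp only: V.scale_left_distrib V.scale_one)
  finally show ?thesis using assms by simp
qed

lemma scale_three_zero:
  fixes x :: 'v assumes "(3::'f) \<noteq> 0" "x + x + x = 0" shows "x = 0"
proof -
  have "sm L 3 x = sm L (1 + 1 + 1) x" by simp
  also have "\<dots> = x + x + x" by (simp only: V.scale_left_distrib V.scale_one)
  finally show ?thesis using assms by simp
qed

lemma center_of_homogeneous: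
  assumes z: "z \<in> part L p" "p < 2" and h: "\<And>q h. q < 2 \<Longrightarrow> h \<in> part L q \<Longrightarrow> br L h z = 0"
  shows "z \<in> center L"
proof (rule centerI)
  show "z \<in> car L" using z part_car by blast
next
  fix y assume "y \<in> ev L"
  thus "br L z y = 0" using br_skew[of p 0 z y] h[of 0 y] z by (simp add: part_def)
next
  fix y assume "y \<in> od L"
  thus "br L z y = 0" using br_skew[of p 1 z y] h[of 1 y] z by (simp add: part_def)
qed

end

definition brackets_in_span :: "('f::field, 'v::ab_group_add) lsa \<Rightarrow> 'v \<Rightarrow> bool" where
  "brackets_in_span L z \<longleftrightarrow> (\<forall>x\<in>car L. \<forall>y\<in>car L. br L x y \<in> module.span (sm L) {z})"

context lie_superalgebra
begin

lemma independent_finite: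
  assumes "fin_dim L" "V.independent S" "S \<subseteq> car L" shows "finite S"
proof -
  obtain B where "finite B" "V.span B = car L" using assms(1) unfolding fin_dim_def by blast
  thus ?thesis using V.independent_span_bound assms(2,3) by blast
qed

lemma basis_extend:
  assumes fin: "fin_dim L" and W: "W \<subseteq> car L" and S: "S \<subseteq> W" "V.independent S"
  obtains B where "S \<subseteq> B" "B \<subseteq> W" "V.independent B" "W \<subseteq> V.span B" "finite B"
proof -
  obtain B where B: "S \<subseteq> B" "B \<subseteq> W" "V.independent B" "W \<subseteq> V.span B"
    using V.maximal_independent_subset_extend[OF S] by blast
  moreover have "finite B" using independent_finite[OF fin B(3)] B(2) W by blast
  ultimately show ?thesis using that by blast
qed

lemma dim_one_line:
  assumes "V.dim S = 1"
  obtains z where "z \<in> S" "z \<noteq> 0" "S \<subseteq> V.span {z}"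
proof -
  obtain B where B: "B \<subseteq> S" "V.independent B" "S \<subseteq> V.span B" "card B = V.dim S"
    by (rule V.basis_exists[of S])
  hence "\<exists>z. B = {z}" using assms card_1_singleton_iff[of B] by simp
  then obtain z where z: "B = {z}" by blast
  hence "z \<noteq> 0" using B(2) V.dependent_zero by blast
  thus ?thesis using that[of z] B(1,3) z by simp
qed

lemma dim_zero_trivial:
  assumes fin: "fin_dim L" and "S \<subseteq> car L" "V.dim S = 0"
  shows "S \<subseteq> {0}"
proof -
  obtain B where B: "B \<subseteq> S" "V.independent B" "S \<subseteq> V.span B" "card B = V.dim S"
    by (rule V.basis_exists[of S])
  have "finite B" using independent_finite[OF fin B(2)] B(1) assms(2) by blast
  hence "B = {}" using B(4) assms(3) by simp
  thus ?thesis using B(3) by simp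
qed

lemma br_in_subspace:
  assumes W: "V.subspace W"
    and homogeneous: "\<And>i j a b. i < 2 \<Longrightarrow> j < 2 \<Longrightarrow> a \<in> part L i \<Longrightarrow> b \<in> part L j \<Longrightarrow> br L a b \<in> W"
    and "x \<in> car L" "y \<in> car L"
  shows "br L x y \<in> W"
proof -
  obtain a b c d where ab: "a \<in> ev L" "b \<in> od L" "x = a + b" and cd: "c \<in> ev L" "d \<in> od L" "y = c + d"
    using car_decomp assms(3,4) by metis
  have "br L x y = (br L a c + br L a d) + (br L b c + br L b d)"
    using ab cd by (simp add: br_add_left br_add_right ev_car od_car car_add)
  moreover have "br L a c \<in> W" "br L a d \<in> W" "br L b c \<in> W" "br L b d \<in> W"
    using homogeneous[of 0 0 a c] homogeneous[of 0 1 a d] homogeneous[of 1 0 b c] homogeneous[of 1 1 b d]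
      ab cd by (auto simp: part_def)
  ultimately show ?thesis using V.subspace_add[OF W] by simp
qed

lemma derived_car: "derived L \<subseteq> car L"
  unfolding derived_def brspan_def by (rule V.span_minimal) (use br_car car_subspace in auto)

lemma br_derived: "x \<in> car L \<Longrightarrow> y \<in> car L \<Longrightarrow> br L x y \<in> derived L"
  unfolding derived_def brspan_def by (rule V.span_base) blast

lemma brackets_in_span_rescale:
  assumes "brackets_in_span L z" "w \<in> V.span {z}" "w \<noteq> 0" shows "brackets_in_span L w"
proof -
  obtain t where t: "w = sm L t z" using assms(2) V.span_singleton by blast
  hence "t \<noteq> 0" using assms(3) by auto
  hence "z = sm L (inverse t) w" using t by simp
  hence "V.span {z} \<subseteq> V.span {w}" using V.span_minimal[of "{z}" "V.span {w}"] V.span_base V.span_scale by simp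
  thus ?thesis using assms(1) unfolding brackets_in_span_def by blast
qed

lemma one_dim_derived_line:
  assumes fin: "fin_dim L" and dim: "dim_ev L (derived L) + dim_od L (derived L) = 1"
  obtains p z where "p < 2" "z \<noteq> 0" "z \<in> derived L" "brackets_in_span L z"
    "\<forall>i<2. \<forall>j<2. \<forall>a\<in>part L i. \<forall>b\<in>part L j. (i + j) mod 2 \<noteq> p \<longrightarrow> br L a b = 0"
proof -
  have homogeneous: "br L a b \<in> derived L \<inter> part L ((i + j) mod 2)"
    if "i < 2" "j < 2" "a \<in> part L i" "b \<in> part L j" for i j a b
    using br_derived br_part part_car that by blast
  obtain p where p: "p < 2" "V.dim (derived L \<inter> part L p) = 1" "V.dim (derived L \<inter> part L (1 - p)) = 0"
  proof (cases "V.dim (derived L \<inter> ev L) = 1")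
    case True thus ?thesis using that[of 0] dim by (simp add: dim_ev_def dim_od_def part_def)
  next
    case False thus ?thesis using that[of 1] dim by (simp add: dim_ev_def dim_od_def part_def)
  qed
  obtain z where z: "z \<in> derived L \<inter> part L p" "z \<noteq> 0" "derived L \<inter> part L p \<subseteq> V.span {z}"
    using dim_one_line[OF p(2)] by blast
  have other_zero: "derived L \<inter> part L (1 - p) \<subseteq> {0}"
    using dim_zero_trivial[OF fin _ p(3)] derived_car by blast
  have vanish: "br L a b = 0"
    if "i < 2" "j < 2" "a \<in> part L i" "b \<in> part L j" "(i + j) mod 2 \<noteq> p" for i j a b
  proof -
    have "(i + j) mod 2 = 1 - p" using p(1) that(5) by linarith
    thus ?thesis using homogeneous[OF that(1-4)] other_zero by auto
  qed
  have "br L a b \<in> V.span {z}" if "i < 2" "j < 2" "a \<in> part L i" "b \<in> part L j" for i j a b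
    using homogeneous[OF that] vanish[OF that] z(3) V.span_zero by (cases "(i + j) mod 2 = p") auto
  hence "brackets_in_span L z"
    unfolding brackets_in_span_def using br_in_subspace[OF V.subspace_span] by blast
  moreover from z(1) have "z \<in> derived L" by blast
  moreover have "\<forall>i<2. \<forall>j<2. \<forall>a\<in>part L i. \<forall>b\<in>part L j. (i + j) mod 2 \<noteq> p \<longrightarrow> br L a b = 0"
    using vanish by blast
  ultimately show ?thesis using that p(1) z(2) by blast
qed

lemma nonzero_homogeneous_bracket:
  assumes "z \<in> derived L" "z \<noteq> 0"
  obtains i j a b where "i < 2" "j < 2" "a \<in> part L i" "b \<in> part L j" "br L a b \<noteq> 0"
proof -
  have "\<exists>i j a b. i < 2 \<and> j < 2 \<and> a \<in> part L i \<and> b \<in> part L j \<and> br L a b \<noteq> 0"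
  proof (rule ccontr)
    assume "\<not> ?thesis"
    hence vanish: "br L a b \<in> {0}" if "i < 2" "j < 2" "a \<in> part L i" "b \<in> part L j" for i j a b
      using that by blast
    have "br L x y \<in> {0}" if "x \<in> car L" "y \<in> car L" for x y
      by (rule br_in_subspace[OF V.subspace_single_0 vanish that])
    hence "{br L a b | a b. a \<in> car L \<and> b \<in> car L} \<subseteq> {0}" by blast
    hence "derived L \<subseteq> {0}" unfolding derived_def brspan_def by (rule V.span_minimal) simp
    thus False using assms by blast
  qed
  then obtain i j a b where "i < 2" "j < 2" "a \<in> part L i" "b \<in> part L j" "br L a b \<noteq> 0"
    by blast
  from that[OF this] show ?thesis .
qed

lemma nilpotent_line_central:
  assumes nil: "nilpotent L" and span: "brackets_in_span L z" and z: "z \<in> car L"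
  shows "z \<in> center L"
proof (rule ccontr)
  assume "z \<notin> center L"
  then obtain x where x: "x \<in> car L" "br L z x \<noteq> 0" using z unfolding center_def by blast
  obtain t where t: "br L z x = sm L t z" using span x z V.span_singleton unfolding brackets_in_span_def by blast
  hence "t \<noteq> 0" using x by auto
  hence fixed: "br L z (sm L (inverse t) x) = z" using br_scale_right[OF z x(1)] t by simp
  have "z \<in> lcs L n" for n
  proof (induction n)
    case (Suc n)
    have "br L z (sm L (inverse t) x) \<in> lcs L (Suc n)"
      unfolding lcs.simps brspan_def using Suc car_scale[OF x(1)] by (intro V.span_base) blast
    thus ?case using fixed by simp
  qed (use z in simp)
  moreover obtain n where "lcs L n = {0}" using nil unfolding nilpotent_def by blast
  ultimately show False using x br_zero_left by (metis singletonD)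
qed

lemma pair_complement:
  assumes x1: "x1 \<in> ev L" and x2: "x2 \<in> car L" and z: "br L x1 x2 = z"
    and x11: "br L x1 x1 = 0" and x22: "br L x2 x2 = 0"
    and span: "brackets_in_span L z" and y: "y \<in> car L"
  obtains s t where "br L (y - sm L s x1 + sm L t x2) x1 = 0" "br L (y - sm L s x1 + sm L t x2) x2 = 0"
proof -
  have x1c: "x1 \<in> car L" using ev_car x1 .
  obtain s where s: "br L y x2 = sm L s z" using span y x2 V.span_singleton unfolding brackets_in_span_def by blast
  obtain t where t: "br L y x1 = sm L t z" using span y x1c V.span_singleton unfolding brackets_in_span_def by blast
  have x21: "br L x2 x1 = - z" using br_skew_ev'[OF x2 x1] z by simp
  show ?thesis
  proof (rule that[of s t])
    show "br L (y - sm L s x1 + sm L t x2) x1 = 0"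
      using t x11 x21 y x1c x2 by (simp add: br_add_left br_diff_left br_scale_left car_scale car_diff V.scale_minus_right)
    show "br L (y - sm L s x1 + sm L t x2) x2 = 0"
      using s x22 z y x1c x2 by (simp add: br_add_left br_diff_left br_scale_left car_scale car_diff)
  qed
qed

lemma independent_homogeneous_Un:
  assumes A: "V.independent A" "A \<subseteq> ev L" and B: "V.independent B" "B \<subseteq> od L"
  shows "V.independent (A \<union> B)"
  unfolding V.independent_explicit_finite_subsets
proof (intro allI impI ballI)
  fix S u v assume S: "S \<subseteq> A \<union> B" "finite S" and sum0: "(\<Sum>v\<in>S. sm L (u v) v) = 0" and v: "v \<in> S"
  have split: "(\<Sum>v\<in>S. sm L (u v) v) = (\<Sum>v\<in>S \<inter> A. sm L (u v) v) + (\<Sum>v\<in>S - A. sm L (u v) v)"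
    using sum.Int_Diff[OF S(2)] by blast
  have e: "(\<Sum>v\<in>S \<inter> A. sm L (u v) v) \<in> ev L"
    using A(2) by (intro V.subspace_sum[OF ev_subspace] V.subspace_scale[OF ev_subspace]) auto
  have o: "(\<Sum>v\<in>S - A. sm L (u v) v) \<in> od L"
    using S(1) B(2) by (intro V.subspace_sum[OF od_subspace] V.subspace_scale[OF od_subspace]) auto
  note zero = homogeneous_sum_zero[OF e o sum0[unfolded split]]
  show "u v = 0"
  proof (cases "v \<in> A")
    case True
    thus ?thesis using V.independentD[OF A(1) _ _ zero(1)] S(2) v by simp
  next
    case False
    thus ?thesis using V.independentD[OF B(1) _ _ zero(2)] S v by auto
  qed
qed

lemma center_homogeneous_basis:
  assumes fin: "fin_dim L" and z: "z \<in> center L" "z \<noteq> 0" "z \<in> ev L \<union> od L"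
  obtains B0 B1 where "B0 \<subseteq> center L \<inter> ev L" "B1 \<subseteq> center L \<inter> od L" "z \<in> B0 \<union> B1"
    "V.independent (B0 \<union> B1)" "center L \<subseteq> V.span (B0 \<union> B1)" "finite B0" "finite B1"
proof -
  have sub: "center L \<inter> ev L \<subseteq> car L" "center L \<inter> od L \<subseteq> car L" using center_car by blast+
  have indep_z: "V.independent ({z} \<inter> X)" for X
    using V.independent_empty V.independent_insertI[of z "{}"] z(2) V.span_empty
    by (cases "z \<in> X") auto
  obtain B0 where B0: "{z} \<inter> (center L \<inter> ev L) \<subseteq> B0" "B0 \<subseteq> center L \<inter> ev L" "V.independent B0"
    "center L \<inter> ev L \<subseteq> V.span B0" "finite B0"
    by (rule basis_extend[OF fin sub(1) Int_lower2 indep_z])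
  obtain B1 where B1: "{z} \<inter> (center L \<inter> od L) \<subseteq> B1" "B1 \<subseteq> center L \<inter> od L" "V.independent B1"
    "center L \<inter> od L \<subseteq> V.span B1" "finite B1"
    by (rule basis_extend[OF fin sub(2) Int_lower2 indep_z])
  have span: "center L \<subseteq> V.span (B0 \<union> B1)"
  proof
    fix c assume c: "c \<in> center L"
    then obtain a b where ab: "a \<in> ev L" "b \<in> od L" "c = a + b" using car_decomp center_car by metis
    have "a \<in> V.span (B0 \<union> B1)" "b \<in> V.span (B0 \<union> B1)"
      using center_components[OF c ab] ab B0(4) B1(4) V.span_mono[of B0 "B0 \<union> B1"] V.span_mono[of B1 "B0 \<union> B1"]
      by blast+
    thus "c \<in> V.span (B0 \<union> B1)" using ab(3) V.span_add by simp
  qed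
  have "z \<in> B0 \<union> B1" using z B0(1) B1(1) by blast
  moreover have "V.independent (B0 \<union> B1)" using independent_homogeneous_Un B0(2,3) B1(2,3) by blast
  ultimately show ?thesis using that[OF B0(2) B1(2) _ _ span B0(5) B1(5)] by blast
qed

lemma independent_insert_pair:
  assumes B: "V.independent B" "B \<subseteq> center L" and x: "x1 \<in> car L" "x2 \<in> car L"
    and z: "br L x1 x2 \<noteq> 0" and x22: "br L x2 x2 = 0"
  shows "V.independent (insert x1 (insert x2 B))" "x1 \<notin> insert x2 B" "x2 \<notin> B"
proof -
  have span_central: "V.span B \<subseteq> center L" using V.span_minimal[OF B(2) center_subspace] .
  have x2: "x2 \<notin> V.span B" using span_central center_br_right[OF _ x(1)] z by blast
  have x1: "x1 \<notin> V.span (insert x2 B)"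
  proof
    assume "x1 \<in> V.span (insert x2 B)"
    then obtain t where "x1 - sm L t x2 \<in> center L" using V.span_breakdown_eq span_central by blast
    hence "br L (x1 - sm L t x2) x2 = 0" using center_br_left x by blast
    moreover have "br L (x1 - sm L t x2) x2 = br L x1 x2"
      using x x22 by (simp add: br_diff_left br_scale_left car_scale)
    ultimately show False using z by simp
  qed
  show "V.independent (insert x1 (insert x2 B))" using x1 x2 B(1) by (simp add: V.independent_insertI)
  show "x1 \<notin> insert x2 B" "x2 \<notin> B" using x1 x2 V.span_base by blast+
qed

lemma lincomb_zero_coeffs:
  fixes n :: nat
  assumes inj: "inj_on e {..<n}" and indep: "V.independent (e ` {..<n})"
    and zero: "(\<Sum>j<n. sm L (c j) (e j)) = 0" and j: "j < n"
  shows "c j = 0"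
proof -
  define u where "u v = c (inv_into {..<n} e v)" for v
  have "(\<Sum>v\<in>e ` {..<n}. sm L (u v) v) = (\<Sum>j<n. sm L (c j) (e j))"
    using inj by (simp add: sum.reindex u_def)
  hence "(\<Sum>v\<in>e ` {..<n}. sm L (u v) v) = 0" using zero by simp
  moreover have "finite (e ` {..<n})" by simp
  ultimately have "u (e j) = 0" using V.independentD[OF indep _ subset_refl] j by blast
  thus ?thesis using inj j by (simp add: u_def)
qed

lemma lincomb_of_span:
  fixes n :: nat
  assumes inj: "inj_on e {..<n}" and y: "y \<in> V.span (e ` {..<n})"
  obtains c where "y = (\<Sum>j<n. sm L (c j) (e j))"
proof -
  have "finite (e ` {..<n})" by simp
  hence "y \<in> range (\<lambda>u. \<Sum>v\<in>e ` {..<n}. sm L (u v) v)" using y V.span_finite by blast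
  then obtain u where "y = (\<Sum>v\<in>e ` {..<n}. sm L (u v) v)" by blast
  also have "\<dots> = (\<Sum>j<n. sm L (u (e j)) (e j))" using inj by (simp add: sum.reindex)
  finally show ?thesis by (rule that)
qed

lemma span_Int_subspace:
  assumes P: "V.subspace P" and Q: "V.subspace Q" and PQ: "P \<inter> Q = {0}"
    and S: "S \<subseteq> P \<union> Q" and span: "P \<subseteq> V.span S"
  shows "P \<subseteq> V.span (S \<inter> P)"
proof
  fix y assume y: "y \<in> P"
  have "(S \<inter> P) \<union> (S \<inter> Q) = S" using S by blast
  moreover have "y \<in> V.span S" using span y by (rule subsetD)
  ultimately have "y \<in> V.span ((S \<inter> P) \<union> (S \<inter> Q))" by simp
  then obtain u w where uw: "u \<in> V.span (S \<inter> P)" "w \<in> V.span (S \<inter> Q)" "y = u + w"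
    unfolding V.span_Un by blast
  have "u \<in> P" using V.span_minimal[OF Int_lower2 P, of S] uw(1) by (rule subsetD)
  have "w \<in> Q" using V.span_minimal[OF Int_lower2 Q, of S] uw(2) by (rule subsetD)
  moreover have "w = y - u" using uw(3) by simp
  ultimately have "w \<in> P \<inter> Q" using V.subspace_diff[OF P y \<open>u \<in> P\<close>] by simp
  thus "y \<in> V.span (S \<inter> P)" using PQ uw by simp
qed

lemma dim_of_homogeneous_basis:
  assumes indep: "V.independent S" and S: "S \<subseteq> ev L \<union> od L" and span: "car L \<subseteq> V.span S"
  shows "V.dim (ev L) = card (S \<inter> ev L)" "V.dim (od L) = card (S \<inter> od L)"
proof -
  have "ev L \<subseteq> V.span S" "od L \<subseteq> V.span S" using span ev_car od_car by blast+
  moreover have "od L \<inter> ev L = {0}" "S \<subseteq> od L \<union> ev L" using ev_od S by blast+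
  ultimately have spans: "ev L \<subseteq> V.span (S \<inter> ev L)" "od L \<subseteq> V.span (S \<inter> od L)"
    using span_Int_subspace[OF ev_subspace od_subspace ev_od S]
      span_Int_subspace[OF od_subspace ev_subspace] by simp_all
  show "V.dim (ev L) = card (S \<inter> ev L)" "V.dim (od L) = card (S \<inter> od L)"
    using V.basis_card_eq_dim[OF Int_lower2 spans(1) V.independent_mono[OF indep Int_lower1]]
      V.basis_card_eq_dim[OF Int_lower2 spans(2) V.independent_mono[OF indep Int_lower1]] by simp_all
qed

lemma lincomb_in_subspace:
  assumes P: "V.subspace P" and terms: "\<And>j. j < n \<Longrightarrow> c j \<noteq> 0 \<Longrightarrow> e j \<in> P"
  shows "(\<Sum>j<n. sm L (c j) (e j)) \<in> P"
proof (rule V.subspace_sum[OF P])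
  fix j assume "j \<in> {..<n}"
  thus "sm L (c j) (e j) \<in> P" using terms[of j] V.subspace_scale[OF P] V.subspace_0[OF P]
    by (cases "c j = 0") auto
qed

lemma br_ev_self_zero: "(2::'f) \<noteq> 0 \<Longrightarrow> x \<in> ev L \<Longrightarrow> br L x x = 0"
  using br_skew_ev[of x x] ev_car scale_two_zero by (metis add_eq_0_iff)

lemma odd_brackets_vanish:
  assumes c2: "(2::'f) \<noteq> 0" and squares: "\<And>y. y \<in> od L \<Longrightarrow> br L y y = 0"
    and y: "y1 \<in> od L" "y2 \<in> od L"
  shows "br L y1 y2 = 0"
proof -
  have yc: "y1 \<in> car L" "y2 \<in> car L" using y od_car by blast+
  have "br L (y1 + y2) (y1 + y2) = br L y1 y1 + br L y1 y2 + (br L y2 y1 + br L y2 y2)"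
    using yc by (simp add: br_add_left br_add_right car_add)
  moreover have "br L (y1 + y2) (y1 + y2) = 0" using squares V.subspace_add[OF od_subspace y] .
  ultimately have "br L y1 y2 + br L y1 y2 = 0" using squares y br_sym_od[OF y(2,1)] by simp
  thus ?thesis using scale_two_zero[OF c2] by blast
qed

end

lemma enumerate_insert3:
  assumes fin: "finite C" "finite D"
    and card: "card (insert x1 (insert x2 (insert z (C \<union> D)))) = 3 + card C + card D"
  obtains e :: "nat \<Rightarrow> 'a" where "e 0 = x1" "e 1 = x2" "e 2 = z"
    "\<And>j. 3 \<le> j \<Longrightarrow> j < 3 + card C \<Longrightarrow> e j \<in> C"
    "\<And>j. 3 + card C \<le> j \<Longrightarrow> j < 3 + card C + card D \<Longrightarrow> e j \<in> D"
    "inj_on e {..<3 + card C + card D}"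
    "e ` {..<3 + card C + card D} = insert x1 (insert x2 (insert z (C \<union> D)))"
proof -
  obtain f where f: "bij_betw f {..<card C} C"
    using ex_bij_betw_nat_finite[OF fin(1)] by (auto simp: atLeast0LessThan)
  obtain g where g: "bij_betw g {..<card D} D"
    using ex_bij_betw_nat_finite[OF fin(2)] by (auto simp: atLeast0LessThan)
  define e where "e j = (if j = 0 then x1 else if j = 1 then x2 else if j = 2 then z
    else if j < 3 + card C then f (j - 3) else g (j - 3 - card C))" for j
  have C_range: "e j \<in> C" if "3 \<le> j" "j < 3 + card C" for j
    using that bij_betwE[OF f] unfolding e_def by auto
  have D_range: "e j \<in> D" if "3 + card C \<le> j" "j < 3 + card C + card D" for j
    using that bij_betwE[OF g] unfolding e_def by auto
  have img: "e ` {..<3 + card C + card D} = insert x1 (insert x2 (insert z (C \<union> D)))"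
  proof
    show "e ` {..<3 + card C + card D} \<subseteq> insert x1 (insert x2 (insert z (C \<union> D)))"
    proof
      fix v assume "v \<in> e ` {..<3 + card C + card D}"
      then obtain j where j: "j < 3 + card C + card D" "v = e j" by blast
      thus "v \<in> insert x1 (insert x2 (insert z (C \<union> D)))"
        using C_range[of j] D_range[of j] by (cases "j < 3") (auto simp: e_def)
    qed
  next
    show "insert x1 (insert x2 (insert z (C \<union> D))) \<subseteq> e ` {..<3 + card C + card D}"
    proof
      fix v assume v: "v \<in> insert x1 (insert x2 (insert z (C \<union> D)))"
      have "v \<in> {x1, x2, z} \<or> v \<in> f ` {..<card C} \<or> v \<in> g ` {..<card D}"
        using v bij_betw_imp_surj_on[OF f] bij_betw_imp_surj_on[OF g] by blast
      moreover have "x1 = e 0" "x2 = e 1" "z = e 2" by (simp_all add: e_def)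
      moreover have "f i = e (3 + i)" if "i < card C" for i using that by (simp add: e_def)
      moreover have "g i = e (3 + card C + i)" if "i < card D" for i using that by (simp add: e_def)
      ultimately show "v \<in> e ` {..<3 + card C + card D}"
        by (elim disjE) (force intro: rev_image_eqI)+
    qed
  qed
  have "inj_on e {..<3 + card C + card D}" using img card by (intro eq_card_imp_inj_on) simp_all
  thus ?thesis using that[of e] C_range D_range img by (simp add: e_def)
qed

definition heis_br :: "(nat \<Rightarrow> 'f::field) \<Rightarrow> (nat \<Rightarrow> 'f) \<Rightarrow> nat \<Rightarrow> 'f" where
  "heis_br u v = (\<lambda>j. if j = 2 then u 0 * v 1 - u 1 * v 0 else 0)"

text \<open>\<open>Heis3 0\<close> is H(1,0) and \<open>Heis3 1\<close> is \<open>H\<^sub>1\<close>: both have basis \<open>e\<^sub>0, e\<^sub>1, e\<^sub>2\<close> with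
  \<open>[e\<^sub>0, e\<^sub>1] = e\<^sub>2\<close>, where \<open>e\<^sub>0\<close> is even and \<open>e\<^sub>1, e\<^sub>2\<close> have parity q.\<close>

definition Heis3 :: "nat \<Rightarrow> ('f::field, nat \<Rightarrow> 'f) lsa" where
  "Heis3 q = (if q = 0 then Heis 1 0 else Hodd 1)"

lemma Heis3_simps:
  "car (Heis3 q) = supp_in 0 3" "ev (Heis3 q) = supp_in 0 (if q = 0 then 3 else 1)"
  "od (Heis3 q) = supp_in (if q = 0 then 3 else 1) 3" "sm (Heis3 q) = fsm" "br (Heis3 q) = heis_br"
  by (simp_all add: Heis3_def Heis_def Hodd_def heis_br_def fun_eq_iff)

lemma Aab_simps:
  "car (Aab a b) = supp_in 0 (a + b)" "ev (Aab a b) = supp_in 0 a" "od (Aab a b) = supp_in a (a + b)"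
  "sm (Aab a b) = fsm" "br (Aab a b) = (\<lambda>u v. 0)"
  by (simp_all add: Aab_def)

lemma dsum_simps:
  "car (dsum A B) = car A \<times> car B" "ev (dsum A B) = ev A \<times> ev B" "od (dsum A B) = od A \<times> od B"
  "sm (dsum A B) c p = (sm A c (fst p), sm B c (snd p))"
  "br (dsum A B) p p' = (br A (fst p) (fst p'), br B (snd p) (snd p'))"
  by (simp_all add: dsum_def split: prod.splits)

lemma Heis3_Aab_simps:
  "car (dsum (Heis3 q) (Aab a b)) = supp_in 0 3 \<times> supp_in 0 (a + b)"
  "ev (dsum (Heis3 q) (Aab a b)) = supp_in 0 (if q = 0 then 3 else 1) \<times> supp_in 0 a"
  "od (dsum (Heis3 q) (Aab a b)) = supp_in (if q = 0 then 3 else 1) 3 \<times> supp_in a (a + b)"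
  "sm (dsum (Heis3 q) (Aab a b)) c p = (fsm c (fst p), fsm c (snd p))"
  "br (dsum (Heis3 q) (Aab a b)) p p' = (heis_br (fst p) (fst p'), 0)"
  by (simp_all add: dsum_simps Heis3_simps Aab_simps zero_fun_def)

lemma supp_in_iff: "v \<in> supp_in a b \<longleftrightarrow> (\<forall>j. j < a \<or> b \<le> j \<longrightarrow> v j = 0)"
  by (simp add: supp_in_def)

lemma graded_carrier_supp_in:
  fixes L :: "('f::field, nat \<Rightarrow> 'f) lsa"
  assumes "car L = supp_in 0 n" "ev L = supp_in 0 m" "od L = supp_in m n" "m \<le> n" "sm L = fsm"
    "\<And>x y. x \<in> car L \<Longrightarrow> y \<in> car L \<Longrightarrow> br L x y \<in> car L"
  shows "graded_carrier L"
  unfolding graded_carrier_def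
proof (intro conjI ballI allI)
  show "car L = {a + b |a b. a \<in> ev L \<and> b \<in> od L}"
  proof (intro set_eqI iffI)
    fix x assume x: "x \<in> car L"
    have "x = (\<lambda>j. if j < m then x j else 0) + (\<lambda>j. if j < m then 0 else x j)" by (auto simp: fun_eq_iff)
    moreover have "(\<lambda>j. if j < m then x j else 0) \<in> ev L" "(\<lambda>j. if j < m then 0 else x j) \<in> od L"
      using x assms by (auto simp: supp_in_iff)
    ultimately show "x \<in> {a + b |a b. a \<in> ev L \<and> b \<in> od L}" by blast
  qed (use assms in \<open>auto simp: supp_in_iff\<close>)
  show "ev L \<inter> od L = {0}" using assms by (auto simp: supp_in_iff fun_eq_iff) (meson not_le)
qed (use assms in \<open>auto simp: supp_in_iff fsm_def\<close>)

lemma graded_carrier_dsum: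
  assumes A: "graded_carrier A" and B: "graded_carrier B"
  shows "graded_carrier (dsum A B)"
  unfolding graded_carrier_def
proof (intro conjI ballI allI)
  show "car (dsum A B) = {a + b |a b. a \<in> ev (dsum A B) \<and> b \<in> od (dsum A B)}"
  proof (intro set_eqI iffI)
    fix x assume "x \<in> car (dsum A B)"
    then obtain a1 b1 a2 b2 where "a1 \<in> ev A" "b1 \<in> od A" "a2 \<in> ev B" "b2 \<in> od B"
      "x = (a1, a2) + (b1, b2)"
      using graded_carrier_car[OF A] graded_carrier_car[OF B]
      by (auto simp: dsum_simps mem_Times_iff) (metis prod.collapse)
    thus "x \<in> {a + b |a b. a \<in> ev (dsum A B) \<and> b \<in> od (dsum A B)}" by (auto simp: dsum_simps)
  next
    fix x assume "x \<in> {a + b |a b. a \<in> ev (dsum A B) \<and> b \<in> od (dsum A B)}"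
    then obtain a b where "a \<in> ev (dsum A B)" "b \<in> od (dsum A B)" "x = a + b" by blast
    thus "x \<in> car (dsum A B)"
      using graded_carrier_car[OF A] graded_carrier_car[OF B] by (auto simp: dsum_simps mem_Times_iff)
  qed
  show "ev (dsum A B) \<inter> od (dsum A B) = {0}"
    using graded_carrier_ev_od[OF A] graded_carrier_ev_od[OF B]
    by (auto simp: dsum_simps zero_prod_def)
  show "0 \<in> ev (dsum A B)" "0 \<in> od (dsum A B)"
    using graded_carrier_ev_zero[OF A] graded_carrier_ev_zero[OF B]
      graded_carrier_od_zero[OF A] graded_carrier_od_zero[OF B] by (simp_all add: dsum_simps zero_prod_def)
  fix x y
  show "x \<in> ev (dsum A B) \<Longrightarrow> y \<in> ev (dsum A B) \<Longrightarrow> x - y \<in> ev (dsum A B)"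
    using graded_carrier_ev_diff[OF A] graded_carrier_ev_diff[OF B] by (simp add: dsum_simps mem_Times_iff)
  show "x \<in> od (dsum A B) \<Longrightarrow> y \<in> od (dsum A B) \<Longrightarrow> x - y \<in> od (dsum A B)"
    using graded_carrier_od_diff[OF A] graded_carrier_od_diff[OF B] by (simp add: dsum_simps mem_Times_iff)
  show "x \<in> car (dsum A B) \<Longrightarrow> y \<in> car (dsum A B) \<Longrightarrow> x + y \<in> car (dsum A B)"
    using graded_carrier_add[OF A] graded_carrier_add[OF B] by (simp add: dsum_simps mem_Times_iff)
  show "x \<in> car (dsum A B) \<Longrightarrow> y \<in> car (dsum A B) \<Longrightarrow> br (dsum A B) x y \<in> car (dsum A B)"
    using graded_carrier_br[OF A] graded_carrier_br[OF B] by (simp add: dsum_simps mem_Times_iff)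
  fix c
  show "x \<in> car (dsum A B) \<Longrightarrow> sm (dsum A B) c x \<in> car (dsum A B)"
    using graded_carrier_sm[OF A] graded_carrier_sm[OF B] by (simp add: dsum_simps mem_Times_iff)
qed

lemma graded_carrier_Heis3_Aab:
  "graded_carrier (dsum (Heis3 q) (Aab a b) :: ('f::field, (nat \<Rightarrow> 'f) \<times> (nat \<Rightarrow> 'f)) lsa)"
proof (rule graded_carrier_dsum)
  show "graded_carrier (Heis3 q :: ('f, nat \<Rightarrow> 'f) lsa)"
    by (rule graded_carrier_supp_in[where n=3 and m="if q = 0 then 3 else 1"])
      (auto simp: Heis3_simps supp_in_iff heis_br_def)
  show "graded_carrier (Aab a b :: ('f, nat \<Rightarrow> 'f) lsa)"
    by (rule graded_carrier_supp_in[where n="a + b" and m=a]) (auto simp: Aab_simps supp_in_iff)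
qed

locale adapted_basis = lie_superalgebra L for L :: "('f::field, 'v::ab_group_add) lsa" +
  fixes q a b :: nat and e :: "nat \<Rightarrow> 'v"
  assumes q: "q < 2"
    and inj: "inj_on e {..<3 + a + b}"
    and independent: "V.independent (e ` {..<3 + a + b})"
    and spanning: "car L \<subseteq> V.span (e ` {..<3 + a + b})"
    and e0: "e 0 \<in> ev L" and e1: "e 1 \<in> part L q"
    and e01: "br L (e 0) (e 1) = e 2" and e00: "br L (e 0) (e 0) = 0" and e11: "br L (e 1) (e 1) = 0"
    and central: "\<And>j. 2 \<le> j \<Longrightarrow> j < 3 + a + b \<Longrightarrow> e j \<in> center L"
    and even: "\<And>j. 3 \<le> j \<Longrightarrow> j < 3 + a \<Longrightarrow> e j \<in> ev L"
    and odd: "\<And>j. 3 + a \<le> j \<Longrightarrow> j < 3 + a + b \<Longrightarrow> e j \<in> od L"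
begin

definition ev_idx :: "nat set" where
  "ev_idx = (if q = 0 then {..<3} else {0}) \<union> {3..<3 + a}"

definition od_idx :: "nat set" where
  "od_idx = (if q = 0 then {} else {1, 2}) \<union> {3 + a..<3 + a + b}"

lemma idx_partition: "{..<3 + a + b} = ev_idx \<union> od_idx" "ev_idx \<inter> od_idx = {}"
  using q unfolding ev_idx_def od_idx_def by auto

lemma e_homogeneous: "j \<in> ev_idx \<Longrightarrow> e j \<in> ev L" "j \<in> od_idx \<Longrightarrow> e j \<in> od L"
proof -
  have "e 2 \<in> part L q" using br_part[of 0 q "e 0" "e 1"] e0 e1 e01 q by (simp add: part_def)
  moreover have "j < 3 \<Longrightarrow> j = 0 \<or> j = 1 \<or> j = 2" by auto
  ultimately show "j \<in> ev_idx \<Longrightarrow> e j \<in> ev L" "j \<in> od_idx \<Longrightarrow> e j \<in> od L"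
    using e0 e1 even odd q unfolding ev_idx_def od_idx_def by (auto simp: part_def split: if_splits)
qed

lemma e_car: "j < 3 + a + b \<Longrightarrow> e j \<in> car L"
  using e_homogeneous idx_partition ev_car od_car by blast

abbreviation model :: "('f, (nat \<Rightarrow> 'f) \<times> (nat \<Rightarrow> 'f)) lsa" where
  "model \<equiv> dsum (Heis3 q) (Aab a b)"

definition coord :: "(nat \<Rightarrow> 'f) \<times> (nat \<Rightarrow> 'f) \<Rightarrow> nat \<Rightarrow> 'f" where
  "coord p j = (if j < 3 then fst p j else snd p (j - 3))"

definition emb :: "(nat \<Rightarrow> 'f) \<times> (nat \<Rightarrow> 'f) \<Rightarrow> 'v" where
  "emb p = (\<Sum>j<3 + a + b. sm L (coord p j) (e j))"

lemma coord_add: "coord (p + p') j = coord p j + coord p' j"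
  and coord_scale: "coord (sm model c p) j = c * coord p j"
  and coord_br: "coord (br model p p') j = (if j = 2 then coord p 0 * coord p' 1 - coord p 1 * coord p' 0 else 0)"
  by (simp_all add: coord_def Heis3_Aab_simps fsm_def heis_br_def)

lemma coord_ev: "p \<in> ev model \<Longrightarrow> j \<in> od_idx \<Longrightarrow> coord p j = 0"
  and coord_od: "p \<in> od model \<Longrightarrow> j \<in> ev_idx \<Longrightarrow> coord p j = 0"
  using q by (auto simp: coord_def Heis3_Aab_simps supp_in_iff ev_idx_def od_idx_def mem_Times_iff split: if_splits)

lemma coord_inj:
  assumes "p \<in> car model" "p' \<in> car model" "\<And>j. j < 3 + a + b \<Longrightarrow> coord p j = coord p' j"
  shows "p = p'"
proof -
  have "fst p j = fst p' j" for j
    using assms(1,2) assms(3)[of j] by (cases "j < 3") (auto simp: coord_def Heis3_Aab_simps supp_in_iff mem_Times_iff)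
  moreover have "snd p i = snd p' i" for i
    using assms(1,2) assms(3)[of "3 + i"] by (cases "i < a + b") (auto simp: coord_def Heis3_Aab_simps supp_in_iff mem_Times_iff)
  ultimately show ?thesis by (simp add: prod_eq_iff fun_eq_iff)
qed

lemma emb_car: "emb p \<in> car L"
  unfolding emb_def using e_car by (intro V.subspace_sum[OF car_subspace] car_scale) auto

lemma emb_add: "emb (p + p') = emb p + emb p'"
  unfolding emb_def coord_add by (simp add: V.scale_left_distrib sum.distrib)

lemma emb_scale: "emb (sm model c p) = sm L c (emb p)"
  unfolding emb_def coord_scale by (simp add: V.scale_sum_right)

lemma emb_ev: "p \<in> ev model \<Longrightarrow> emb p \<in> ev L"
  unfolding emb_def using coord_ev e_homogeneous idx_partition
  by (intro lincomb_in_subspace[OF ev_subspace]) blast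

lemma emb_od: "p \<in> od model \<Longrightarrow> emb p \<in> od L"
  unfolding emb_def using coord_od e_homogeneous idx_partition
  by (intro lincomb_in_subspace[OF od_subspace]) blast

lemma emb_split:
  "emb p = (sm L (coord p 0) (e 0) + sm L (coord p 1) (e 1)) + (\<Sum>j\<in>{2..<3 + a + b}. sm L (coord p j) (e j))"
  unfolding emb_def atLeast0LessThan[symmetric] by (simp add: sum.atLeast_Suc_lessThan numeral_2_eq_2)

lemma emb_br: "emb (br model p p') = br L (emb p) (emb p')"
proof -
  define X where "X p = sm L (coord p 0) (e 0) + sm L (coord p 1) (e 1)" for p
  define R where "R p = (\<Sum>j\<in>{2..<3 + a + b}. sm L (coord p j) (e j))" for p
  have X: "X p \<in> car L" for p unfolding X_def using e_car by (simp add: car_add car_scale)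
  have R: "R p \<in> center L" for p
    unfolding R_def using central by (intro V.subspace_sum[OF center_subspace] V.subspace_scale[OF center_subspace]) auto
  have "br L (emb p) (emb p') = br L (X p) (X p')"
    using emb_split[of p] emb_split[of p'] X R center_car center_br_left center_br_right
    unfolding X_def[symmetric] R_def[symmetric] by (simp add: br_add_left br_add_right car_add)
  also have "\<dots> = sm L (coord p 0 * coord p' 1 - coord p 1 * coord p' 0) (e 2)"
  proof -
    have c: "e 0 \<in> car L" "e 1 \<in> car L" using e_car by simp_all
    have e10: "br L (e 1) (e 0) = - e 2" using br_skew_ev'[OF c(2) e0] e01 by simp
    have "br L (X p) (X p') = sm L (coord p' 0) (sm L (coord p 0) (br L (e 0) (e 0)) + sm L (coord p 1) (br L (e 1) (e 0)))
        + sm L (coord p' 1) (sm L (coord p 0) (br L (e 0) (e 1)) + sm L (coord p 1) (br L (e 1) (e 1)))"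
      unfolding X_def using c by (simp add: br_add_left br_add_right br_scale_left br_scale_right car_scale car_add)
    also have "\<dots> = sm L (coord p' 1 * coord p 0) (e 2) - sm L (coord p' 0 * coord p 1) (e 2)"
      using e00 e01 e11 e10 by (simp add: V.scale_minus_right)
    finally show ?thesis by (simp add: V.scale_left_diff_distrib mult.commute)
  qed
  also have "\<dots> = emb (br model p p')"
    unfolding emb_def coord_br by (simp add: if_distrib[of "\<lambda>c. sm L c _"] cong: if_cong)
  finally show ?thesis ..
qed

lemma emb_bij: "bij_betw emb (car model) (car L)"
  unfolding bij_betw_def
proof
  show "inj_on emb (car model)"
  proof (rule inj_onI)
    fix p p' assume p: "p \<in> car model" "p' \<in> car model" and eq: "emb p = emb p'"
    have "(\<Sum>j<3 + a + b. sm L (coord p j - coord p' j) (e j)) = emb p - emb p'"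
      unfolding emb_def by (simp add: V.scale_left_diff_distrib sum_subtractf)
    hence "coord p j - coord p' j = 0" if "j < 3 + a + b" for j
      using lincomb_zero_coeffs[OF inj independent, of "\<lambda>j. coord p j - coord p' j" j] that eq by simp
    thus "p = p'" using coord_inj[OF p] by simp
  qed
  show "emb ` car model = car L"
  proof
    show "emb ` car model \<subseteq> car L" using emb_car by blast
  next
    show "car L \<subseteq> emb ` car model"
    proof
      fix y assume "y \<in> car L"
      then obtain c where c: "y = (\<Sum>j<3 + a + b. sm L (c j) (e j))"
        using lincomb_of_span[OF inj] spanning by blast
      define p where "p = ((\<lambda>j. if j < 3 then c j else 0), (\<lambda>i. if i < a + b then c (3 + i) else 0))"
      have "p \<in> car model" unfolding p_def Heis3_Aab_simps by (auto simp: supp_in_iff)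
      moreover have "emb p = y" unfolding c emb_def p_def coord_def by (intro sum.cong) auto
      ultimately show "y \<in> emb ` car model" by blast
    qed
  qed
qed

lemma isomorphic_model: "isomorphic L model"
proof -
  have "lsa_hom model L emb"
    unfolding lsa_hom_def image_subset_iff using emb_car emb_add emb_scale emb_ev emb_od emb_br by simp
  hence "lsa_iso L model (inv_into (car model) emb)"
    using lsa_iso_inv_into emb_bij graded_carrier_Heis3_Aab graded by blast
  thus ?thesis unfolding isomorphic_def by blast
qed

lemma e_nonzero: "j < 3 + a + b \<Longrightarrow> e j \<noteq> 0"
  using independent V.dependent_zero by (metis imageI lessThan_iff)

lemma e_parity_iff:
  assumes j: "j < 3 + a + b"
  shows "e j \<in> ev L \<longleftrightarrow> j \<in> ev_idx" "e j \<in> od L \<longleftrightarrow> j \<in> od_idx"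
proof -
  have "e j \<notin> ev L \<inter> od L" using ev_od e_nonzero[OF j] by simp
  moreover have "j \<in> ev_idx \<or> j \<in> od_idx" using idx_partition(1) j by blast
  ultimately show "e j \<in> ev L \<longleftrightarrow> j \<in> ev_idx" "e j \<in> od L \<longleftrightarrow> j \<in> od_idx"
    using e_homogeneous idx_partition(2) by blast+
qed

lemma dims_model:
  "V.dim (ev L) = (if q = 0 then 3 else 1) + a" "V.dim (od L) = (if q = 0 then 0 else 2) + b"
proof -
  let ?S = "e ` {..<3 + a + b}"
  have sub: "ev_idx \<subseteq> {..<3 + a + b}" "od_idx \<subseteq> {..<3 + a + b}" using idx_partition(1) by blast+
  have "?S \<inter> ev L = e ` ev_idx" "?S \<inter> od L = e ` od_idx"
    using e_parity_iff sub by auto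
  moreover have "?S \<subseteq> ev L \<union> od L" using e_parity_iff idx_partition(1) by auto
  ultimately have "V.dim (ev L) = card (e ` ev_idx)" "V.dim (od L) = card (e ` od_idx)"
    using dim_of_homogeneous_basis[OF independent _ spanning] by simp_all
  moreover have "inj_on e ev_idx" "inj_on e od_idx" using inj_on_subset[OF inj] sub by blast+
  moreover have "card ev_idx = (if q = 0 then 3 else 1) + a" "card od_idx = (if q = 0 then 0 else 2) + b"
    unfolding ev_idx_def od_idx_def by (auto simp: ivl_disj_un card_Un_disjoint)
  ultimately show "V.dim (ev L) = (if q = 0 then 3 else 1) + a" "V.dim (od L) = (if q = 0 then 0 else 2) + b"
    by (simp_all add: card_image)
qed

end

locale heisenberg_pair = lie_superalgebra L for L :: "('f::field, 'v::ab_group_add) lsa" +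
  fixes q :: nat and x1 x2 :: 'v
  assumes q: "q < 2" and x1: "x1 \<in> ev L" and x2: "x2 \<in> part L q"
    and nonzero: "br L x1 x2 \<noteq> 0" and central: "br L x1 x2 \<in> center L"
    and x11: "br L x1 x1 = 0" and x22: "br L x2 x2 = 0"
    and span: "brackets_in_span L (br L x1 x2)"
    and commuting: "\<And>i j v w. i < 2 \<Longrightarrow> j < 2 \<Longrightarrow> v \<in> part L i \<Longrightarrow> w \<in> part L j \<Longrightarrow>
        br L v x1 = 0 \<Longrightarrow> br L v x2 = 0 \<Longrightarrow> br L w x1 = 0 \<Longrightarrow> br L w x2 = 0 \<Longrightarrow> br L v w = 0"
begin

lemma x2_car: "x2 \<in> car L"
  using part_car q x2 by blast

lemma centralizer_central:
  assumes v: "v \<in> car L" "br L v x1 = 0" "br L v x2 = 0"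
  shows "v \<in> center L"
proof -
  have x1p: "x1 \<in> part L 0" using x1 by (simp add: part_def)
  have components: "br L a x1 = 0 \<and> br L a x2 = 0 \<and> br L b x1 = 0 \<and> br L b x2 = 0"
    if "a \<in> ev L" "b \<in> od L" "br L (a + b) x1 = 0" "br L (a + b) x2 = 0" for a b
    using br_zero_components[OF x1p _ that(1,2,3)] br_zero_components[OF x2 q that(1,2,4)] by simp
  obtain a b where ab: "a \<in> ev L" "b \<in> od L" "v = a + b" using car_decomp[OF v(1)] by blast
  have "br L v y' = 0" if y': "y' \<in> car L" "br L y' x1 = 0" "br L y' x2 = 0" for y'
  proof -
    obtain c d where cd: "c \<in> ev L" "d \<in> od L" "y' = c + d" using car_decomp[OF y'(1)] by blast
    have a0: "br L a x1 = 0" "br L a x2 = 0" and b0: "br L b x1 = 0" "br L b x2 = 0"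
      using components[OF ab(1,2)] ab(3) v by simp_all
    have c0: "br L c x1 = 0" "br L c x2 = 0" and d0: "br L d x1 = 0" "br L d x2 = 0"
      using components[OF cd(1,2)] cd(3) y' by simp_all
    have "br L a c = 0" "br L a d = 0" "br L b c = 0" "br L b d = 0"
      using commuting[of 0 0 a c] commuting[of 0 1 a d] commuting[of 1 0 b c] commuting[of 1 1 b d]
        a0 b0 c0 d0 ab cd by (simp_all add: part_def)
    thus ?thesis using ab cd br_add_left br_add_right ev_car od_car car_add by simp
  qed
  moreover have "br L v y = 0" if y: "y \<in> car L" for y
  proof -
    obtain s t where st: "br L (y - sm L s x1 + sm L t x2) x1 = 0" "br L (y - sm L s x1 + sm L t x2) x2 = 0"
      using pair_complement[OF x1 x2_car refl x11 x22 span y] by blast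
    have y'c: "y - sm L s x1 + sm L t x2 \<in> car L" using y ev_car[OF x1] x2_car by (intro car_add car_diff car_scale)
    have "br L v (y - sm L s x1 + sm L t x2) = br L v y"
      using v y ev_car[OF x1] x2_car br_add_right[of "y - sm L s x1" "sm L t x2" v]
      by (simp add: br_diff_right br_scale_right car_scale car_diff)
    thus ?thesis using calculation[OF y'c st] by simp
  qed
  ultimately show ?thesis using v(1) unfolding center_def by blast
qed

lemma car_span_pair_center:
  assumes B: "center L \<subseteq> V.span B"
  shows "car L \<subseteq> V.span (insert x1 (insert x2 B))"
proof
  fix y assume y: "y \<in> car L"
  obtain s t where st: "br L (y - sm L s x1 + sm L t x2) x1 = 0" "br L (y - sm L s x1 + sm L t x2) x2 = 0"
    using pair_complement[OF x1 x2_car refl x11 x22 span y] by blast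
  have "y - sm L s x1 + sm L t x2 \<in> car L" using y ev_car[OF x1] x2_car by (intro car_add car_diff car_scale)
  hence y': "y - sm L s x1 + sm L t x2 \<in> V.span (insert x1 (insert x2 B))"
    using centralizer_central[OF _ st] B V.span_mono[of B "insert x1 (insert x2 B)"] by blast
  have "x1 \<in> V.span (insert x1 (insert x2 B))" "x2 \<in> V.span (insert x1 (insert x2 B))"
    by (simp_all add: V.span_base)
  from V.span_diff[OF V.span_add[OF y' V.span_scale[OF this(1), of s]] V.span_scale[OF this(2), of t]]
  show "y \<in> V.span (insert x1 (insert x2 B))" by simp
qed

lemma basis_through_pair:
  assumes fin: "fin_dim L"
  obtains C D where "C \<subseteq> center L \<inter> ev L" "D \<subseteq> center L \<inter> od L" "finite C" "finite D"
    "V.independent (insert x1 (insert x2 (insert (br L x1 x2) (C \<union> D))))"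
    "car L \<subseteq> V.span (insert x1 (insert x2 (insert (br L x1 x2) (C \<union> D))))"
    "card (insert x1 (insert x2 (insert (br L x1 x2) (C \<union> D)))) = 3 + card C + card D"
proof -
  define z where "z = br L x1 x2"
  have "z \<in> part L q" using br_part[of 0 q x1 x2] x1 x2 q by (simp add: part_def z_def)
  hence "z \<in> ev L \<union> od L" by (auto simp: part_def split: if_splits)
  then obtain B0 B1 where B: "B0 \<subseteq> center L \<inter> ev L" "B1 \<subseteq> center L \<inter> od L" "z \<in> B0 \<union> B1"
    "V.independent (B0 \<union> B1)" "center L \<subseteq> V.span (B0 \<union> B1)" "finite B0" "finite B1"
    by (rule center_homogeneous_basis[OF fin central[folded z_def] nonzero[folded z_def]])
  have pair: "V.independent (insert x1 (insert x2 (B0 \<union> B1)))"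
      "x1 \<notin> insert x2 (B0 \<union> B1)" "x2 \<notin> B0 \<union> B1"
    using independent_insert_pair[OF B(4) _ ev_car[OF x1] x2_car nonzero x22] B(1,2) by blast+
  have "B0 \<inter> B1 \<subseteq> {0}" using B(1,2) ev_od by blast
  hence disjoint: "B0 \<inter> B1 = {}" using V.dependent_zero V.independent_mono[OF B(4)] by blast
  define C D where "C = B0 - {z}" and "D = B1 - {z}"
  have BCD: "B0 \<union> B1 = insert z (C \<union> D)" using B(3) unfolding C_def D_def by blast
  have fin_CD: "finite C" "finite D" using B(6,7) unfolding C_def D_def by simp_all
  have "C \<inter> D = {}" "z \<notin> C \<union> D" using disjoint unfolding C_def D_def by blast+
  hence "card (B0 \<union> B1) = Suc (card C + card D)"
    unfolding BCD using fin_CD by (simp add: card_Un_disjoint)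
  hence "card (insert x1 (insert x2 (B0 \<union> B1))) = 3 + card C + card D"
    using pair(2,3) B(6,7) by simp
  moreover have "C \<subseteq> center L \<inter> ev L" "D \<subseteq> center L \<inter> od L" using B(1,2) unfolding C_def D_def by blast+
  ultimately show ?thesis
    using that[OF _ _ fin_CD] pair(1) car_span_pair_center[OF B(5)] unfolding z_def[symmetric] BCD[symmetric]
    by blast
qed

lemma normal_form:
  assumes fin: "fin_dim L"
  obtains a b where "isomorphic L (dsum (Heis3 q) (Aab a b))"
    "V.dim (ev L) = (if q = 0 then 3 else 1) + a" "V.dim (od L) = (if q = 0 then 0 else 2) + b"
proof -
  obtain C D where CD: "C \<subseteq> center L \<inter> ev L" "D \<subseteq> center L \<inter> od L" "finite C" "finite D"
    and basis: "V.independent (insert x1 (insert x2 (insert (br L x1 x2) (C \<union> D))))"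
      "car L \<subseteq> V.span (insert x1 (insert x2 (insert (br L x1 x2) (C \<union> D))))"
    and card: "card (insert x1 (insert x2 (insert (br L x1 x2) (C \<union> D)))) = 3 + card C + card D"
    by (rule basis_through_pair[OF fin])
  obtain e where e: "e 0 = x1" "e 1 = x2" "e 2 = br L x1 x2"
    "\<And>j. 3 \<le> j \<Longrightarrow> j < 3 + card C \<Longrightarrow> e j \<in> C"
    "\<And>j. 3 + card C \<le> j \<Longrightarrow> j < 3 + card C + card D \<Longrightarrow> e j \<in> D"
    "inj_on e {..<3 + card C + card D}"
    "e ` {..<3 + card C + card D} = insert x1 (insert x2 (insert (br L x1 x2) (C \<union> D)))"
    using enumerate_insert3[OF CD(3,4) card] by blast
  have e_central: "e j \<in> center L" if "2 \<le> j" "j < 3 + card C + card D" for j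
  proof (cases "j = 2")
    case False
    hence "e j \<in> C \<union> D" using that e(4,5) by (cases "j < 3 + card C") auto
    thus ?thesis using CD by blast
  qed (use e(3) central in simp)
  have "adapted_basis L q (card C) (card D) e"
    using e q x1 x2 x11 x22 basis e_central CD by unfold_locales auto
  thus ?thesis using that adapted_basis.isomorphic_model adapted_basis.dims_model by blast
qed

end

locale central_quotient = L: lie_superalgebra L
  for L :: "('f::field, 'v::ab_group_add) lsa" +
  fixes H :: "('f, 'h::ab_group_add) lsa" and f :: "'h \<Rightarrow> 'v"
  assumes cq: "central_quot H L f"
begin

sublocale H: lie_superalgebra H
  using cq by (simp add: central_quot_def lie_superalgebra_def)

lemma f_hom: "lsa_hom H L f" and f_onto: "f ` car H = car L"
  and f_kernel: "{x \<in> car H. f x = 0} = center H"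
  using cq by (simp_all add: central_quot_def)

lemma f_diff: "x \<in> car H \<Longrightarrow> y \<in> car H \<Longrightarrow> f (x - y) = f x - f y"
  using lsa_hom_add[OF f_hom, of "x - y" y] H.car_diff by (simp add: algebra_simps)

lemma f_lift_part:
  assumes i: "i < 2" and x: "x \<in> part L i"
  obtains y where "y \<in> part H i" "f y = x"
proof -
  obtain y where y: "y \<in> car H" "f y = x" using f_onto L.part_car[OF i x] by (metis imageE)
  obtain a b where ab: "a \<in> ev H" "b \<in> od H" "y = a + b" using H.car_decomp[OF y(1)] by blast
  have "x = f a + f b" using y ab lsa_hom_add[OF f_hom] H.ev_car H.od_car by simp
  moreover have "f a \<in> ev L" "f b \<in> od L" using ab lsa_hom_ev[OF f_hom] lsa_hom_od[OF f_hom] by auto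
  moreover have "x \<in> ev L \<and> i = 0 \<or> x \<in> od L \<and> i = 1"
    using i x by (auto simp: part_def split: if_splits)
  ultimately have "x = f a \<and> i = 0 \<or> x = f b \<and> i = 1"
    using graded_carrier_decomp_unique[OF L.graded] L.V.subspace_0[OF L.ev_subspace]
      L.V.subspace_0[OF L.od_subspace] by (metis add_0 add.right_neutral)
  thus ?thesis using that ab by (auto simp: part_def)
qed

text \<open>Modulo \<open>Z(H)\<close> every bracket is a multiple of \<open>[a, b]\<close>, so the Jacobi identity makes
  \<open>[a, b]\<close> commute with every homogeneous element.\<close>

lemma bracket_central_in_cover:
  assumes ij: "i < 2" "j < 2" and a: "a \<in> part H i" and b: "b \<in> part H j"
    and span: "brackets_in_span L (f (br H a b))"
    and aab: "br H a (br H a b) = 0" and bab: "br H b (br H a b) = 0"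
  shows "br H a b \<in> center H"
proof -
  define z where "z = br H a b"
  have ac: "a \<in> car H" "b \<in> car H" using H.part_car ij a b by blast+
  have zp: "z \<in> part H ((i + j) mod 2)" unfolding z_def using H.br_part ij a b by blast
  have zc: "z \<in> car H" unfolding z_def using H.br_car ac by blast
  have up_to_center: "\<exists>t c. c \<in> center H \<and> br H h u = sm H t z + c"
    if "h \<in> car H" "u \<in> car H" for h u
  proof -
    have "f (br H h u) \<in> L.V.span {f z}"
      using span lsa_hom_br[OF f_hom] lsa_hom_car[OF f_hom] that
      unfolding brackets_in_span_def z_def by metis
    then obtain t where t: "f (br H h u) = sm L t (f z)" using L.V.span_singleton by blast
    have "br H h u - sm H t z \<in> car H" using H.br_car H.car_scale H.car_diff zc that by blast
    moreover have "f (br H h u - sm H t z) = 0"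
      using t f_diff lsa_hom_sm[OF f_hom] H.br_car H.car_scale zc that by simp
    ultimately show ?thesis using f_kernel by (intro exI[of _ t] exI[of _ "br H h u - sm H t z"]) auto
  qed
  have zb: "br H z b = 0"
    using H.br_skew[of "(i + j) mod 2" j z b] zp b ij bab unfolding z_def by simp
  have "br H h z = 0" if q: "q < 2" "h \<in> part H q" for q h
  proof -
    have hc: "h \<in> car H" using H.part_car q by blast
    obtain t c where c: "c \<in> center H" "br H h a = sm H t z + c" using up_to_center hc ac by blast
    obtain t' c' where c': "c' \<in> center H" "br H h b = sm H t' z + c'" using up_to_center hc ac by blast
    have "br H (br H h a) b = 0"
      using c zb H.br_add_left H.br_scale_left H.car_scale H.center_car H.center_br_left zc ac by simp
    moreover have "br H a (br H h b) = 0"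
      using c' aab H.br_add_right H.br_scale_right H.car_scale H.center_car H.center_br_right zc ac
      unfolding z_def by simp
    ultimately show ?thesis
      using H.br_jacobi[of q i j h a b] q ij a b unfolding z_def by simp
  qed
  thus ?thesis using H.center_of_homogeneous[OF zp] unfolding z_def by simp
qed

lemma cover_odd_square_zero:
  assumes c3: "(3::'f) \<noteq> 0" and a: "a \<in> od H" and span: "brackets_in_span L (f (br H a a))"
  shows "f (br H a a) = 0"
proof -
  have aa: "br H a a \<in> ev H" using H.br_od_od a by blast
  have "br H a (br H a a) = br H (br H a a) a - br H a (br H a a)"
    using H.br_jacobi[of 1 1 1 a a a] a by (simp add: part_def sgnmul_def)
  moreover have "br H (br H a a) a = - br H a (br H a a)"
    using H.br_skew_ev[OF aa H.od_car[OF a]] .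
  ultimately have "br H a (br H a a) + br H a (br H a a) + br H a (br H a a) = 0"
    by (simp add: algebra_simps)
  hence "br H a (br H a a) = 0" using H.scale_three_zero[OF c3] by blast
  hence "br H a a \<in> center H"
    using bracket_central_in_cover[of 1 1 a a] a span by (simp add: part_def)
  thus ?thesis using f_kernel by blast
qed

text \<open>If \<open>f [c, d] \<noteq> 0\<close> then \<open>[c, d] \<equiv> s [a, b]\<close> modulo \<open>Z(H)\<close> with \<open>s \<noteq> 0\<close>, and the Jacobi identity
  gives \<open>[a, [c, d]] = [b, [c, d]] = 0\<close>.\<close>

lemma cover_commuting_pairs:
  assumes ij: "i < 2" "j < 2" "i' < 2" "j' < 2"
    and a: "a \<in> part H i" and b: "b \<in> part H j" and c: "c \<in> part H i'" and d: "d \<in> part H j'"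
    and commute: "f (br H a c) = 0" "f (br H a d) = 0" "f (br H b c) = 0" "f (br H b d) = 0"
    and span: "brackets_in_span L (f (br H a b))"
  shows "f (br H a b) = 0 \<or> f (br H c d) = 0"
proof (rule disjCI)
  assume cd: "f (br H c d) \<noteq> 0"
  have hc: "a \<in> car H" "b \<in> car H" "c \<in> car H" "d \<in> car H" using H.part_car ij a b c d by blast+
  define z where "z = br H a b"
  have zc: "z \<in> car H" unfolding z_def using H.br_car hc by blast
  have cdc: "br H c d \<in> car H" using H.br_car hc by blast
  have "f (br H c d) \<in> L.V.span {f z}"
    using span lsa_hom_br[OF f_hom] lsa_hom_car[OF f_hom] hc unfolding brackets_in_span_def z_def by metis
  then obtain s where s: "f (br H c d) = sm L s (f z)" using L.V.span_singleton by blast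
  have s0: "s \<noteq> 0" using s cd by auto
  define w where "w = br H c d - sm H s z"
  have "w \<in> car H" "f w = 0"
    using H.car_diff[OF cdc H.car_scale[OF zc]] f_diff[OF cdc H.car_scale[OF zc]]
      lsa_hom_sm[OF f_hom zc] s unfolding w_def by simp_all
  hence w: "w \<in> center H" using f_kernel by blast
  have cd_eq: "br H c d = sm H s z + w" unfolding w_def by simp
  have kills_z: "br H x z = 0"
    if x: "x \<in> part H k" "k < 2" "f (br H x c) = 0" "f (br H x d) = 0" for x k
  proof -
    have xc: "x \<in> car H" using H.part_car x by blast
    have central: "br H x c \<in> center H" "br H x d \<in> center H"
      using x f_kernel H.br_car xc hc by blast+
    have "br H x (br H c d) = 0"
      using H.br_jacobi[of k i' j' x c d] x ij c d H.center_br_left[OF central(1)]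
        H.center_br_right[OF central(2)] hc by simp
    moreover have "br H x (br H c d) = sm H s (br H x z) + br H x w"
      unfolding cd_eq using H.br_add_right H.br_scale_right H.car_scale zc H.center_car[OF w] xc
      by simp
    ultimately show ?thesis using H.center_br_right[OF w xc] s0 by simp
  qed
  have "br H a z = 0" "br H b z = 0"
    using kills_z[OF a ij(1) commute(1,2)] kills_z[OF b ij(2) commute(3,4)] .
  hence "z \<in> center H"
    using bracket_central_in_cover[OF ij(1,2) a b] span unfolding z_def by blast
  thus "f (br H a b) = 0" using f_kernel unfolding z_def by blast
qed

lemma capable_odd_square_zero:
  assumes c3: "(3::'f) \<noteq> 0" and y: "y \<in> od L" and span: "brackets_in_span L (br L y y)"
  shows "br L y y = 0"
proof -
  obtain a where a: "a \<in> part H 1" "f a = y" using f_lift_part[of 1 y] y by (auto simp: part_def)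
  have "f (br H a a) = br L y y" using lsa_hom_br[OF f_hom] H.part_car[of 1 a] a by simp
  thus ?thesis using cover_odd_square_zero[OF c3, of a] a span by (simp add: part_def)
qed

lemma capable_commuting_pairs:
  assumes ij: "i < 2" "j < 2" "i' < 2" "j' < 2"
    and a: "a \<in> part L i" and b: "b \<in> part L j" and c: "c \<in> part L i'" and d: "d \<in> part L j'"
    and commute: "br L a c = 0" "br L a d = 0" "br L b c = 0" "br L b d = 0"
    and span: "brackets_in_span L (br L a b)"
  shows "br L a b = 0 \<or> br L c d = 0"
proof -
  obtain a' where a': "a' \<in> part H i" "f a' = a" using f_lift_part ij a by metis
  obtain b' where b': "b' \<in> part H j" "f b' = b" using f_lift_part ij b by metis
  obtain c' where c': "c' \<in> part H i'" "f c' = c" using f_lift_part ij c by metis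
  obtain d' where d': "d' \<in> part H j'" "f d' = d" using f_lift_part ij d by metis
  have "f (br H x y) = br L (f x) (f y)" if "x \<in> {a', b', c', d'}" "y \<in> {a', b', c', d'}" for x y
    using lsa_hom_br[OF f_hom] H.part_car that ij a' b' c' d' by blast
  thus ?thesis
    using cover_commuting_pairs[OF ij a'(1) b'(1) c'(1) d'(1)] a' b' c' d' commute span by simp
qed

lemma capable_homogeneous_pair:
  assumes c2: "(2::'f) \<noteq> 0" and c3: "(3::'f) \<noteq> 0" and fin: "fin_dim L"
    and dim: "dim_ev L (derived L) + dim_od L (derived L) = 1"
  obtains q x1 x2 where "q < 2" "x1 \<in> ev L" "x2 \<in> part L q" "br L x1 x2 \<noteq> 0"
    "brackets_in_span L (br L x1 x2)" "br L x2 x2 = 0"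
proof -
  obtain p z where p: "p < 2" and z: "z \<noteq> 0" "z \<in> derived L" "brackets_in_span L z"
    and vanish: "\<forall>i<2. \<forall>j<2. \<forall>a\<in>part L i. \<forall>b\<in>part L j. (i + j) mod 2 \<noteq> p \<longrightarrow> br L a b = 0"
    by (rule L.one_dim_derived_line[OF fin dim])
  have span: "brackets_in_span L (br L x y)" if "x \<in> car L" "y \<in> car L" "br L x y \<noteq> 0" for x y
    using L.brackets_in_span_rescale[OF z(3)] z(3) that unfolding brackets_in_span_def by blast
  obtain i j a b where ab: "i < 2" "j < 2" "a \<in> part L i" "b \<in> part L j" "br L a b \<noteq> 0"
    by (rule L.nonzero_homogeneous_bracket[OF z(2,1)])
  have abc: "a \<in> car L" "b \<in> car L" using L.part_car ab by blast+
  have parity: "(i + j) mod 2 = p" using vanish ab by blast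
  show ?thesis
  proof (cases "p = 0")
    case True
    have "br L y y = 0" if "y \<in> od L" for y
      using capable_odd_square_zero[OF c3 that] span L.od_car[OF that] by blast
    hence odd_zero: "br L y1 y2 = 0" if "y1 \<in> od L" "y2 \<in> od L" for y1 y2
      using L.odd_brackets_vanish[OF c2] that by blast
    have "i = 0 \<and> j = 0" using parity True ab odd_zero by (auto simp: part_def less_2_cases_iff)
    hence "a \<in> ev L" "b \<in> part L 0" using ab by (simp_all add: part_def)
    thus ?thesis using that[of 0 a b] ab(5) span[OF abc ab(5)] L.br_ev_self_zero[OF c2] by (simp add: part_def)
  next
    case False
    hence odd_zero: "br L y1 y2 = 0" if "y1 \<in> od L" "y2 \<in> od L" for y1 y2
      using vanish that p by (auto simp: part_def)
    have "(i = 0 \<and> j = 1) \<or> (i = 1 \<and> j = 0)" using parity False p ab by (auto simp: less_2_cases_iff)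
    thus ?thesis
    proof (elim disjE conjE)
      assume "i = 0" "j = 1"
      thus ?thesis using that[of 1 a b] ab span[OF abc ab(5)] odd_zero by (simp add: part_def)
    next
      assume "i = 1" "j = 0"
      hence "b \<in> ev L" "a \<in> part L 1" "br L b a = - br L a b"
        using ab L.br_skew_ev[of b a] abc by (simp_all add: part_def)
      thus ?thesis using that[of 1 b a] ab span[OF abc(2,1)] odd_zero by (simp add: part_def)
    qed
  qed
qed

lemma capable_heisenberg_pair:
  assumes c2: "(2::'f) \<noteq> 0" and c3: "(3::'f) \<noteq> 0" and fin: "fin_dim L" and nil: "nilpotent L"
    and dim: "dim_ev L (derived L) + dim_od L (derived L) = 1"
  obtains q x1 x2 where "heisenberg_pair L q x1 x2"
proof -
  obtain q x1 x2 where pair: "q < 2" "x1 \<in> ev L" "x2 \<in> part L q" "br L x1 x2 \<noteq> 0"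
    "brackets_in_span L (br L x1 x2)" "br L x2 x2 = 0"
    by (rule capable_homogeneous_pair[OF c2 c3 fin dim])
  have x1p: "x1 \<in> part L 0" using pair(2) by (simp add: part_def)
  have central: "br L x1 x2 \<in> center L"
    using L.nilpotent_line_central[OF nil pair(5)] L.br_car L.ev_car L.part_car pair by blast
  have "br L v w = 0"
    if "i < 2" "j < 2" "v \<in> part L i" "w \<in> part L j"
       "br L v x1 = 0" "br L v x2 = 0" "br L w x1 = 0" "br L w x2 = 0" for i j v w
  proof -
    have "br L x1 v = 0" "br L x1 w = 0" "br L x2 v = 0" "br L x2 w = 0"
      using L.br_homogeneous_zero_sym[of 0 i x1 v] L.br_homogeneous_zero_sym[of 0 j x1 w]
        L.br_homogeneous_zero_sym[of q i x2 v] L.br_homogeneous_zero_sym[of q j x2 w] x1p pair(1,3) that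
      by simp_all
    thus ?thesis using capable_commuting_pairs[OF _ pair(1) that(1,2) x1p pair(3) that(3,4)] pair(4,5) by simp
  qed
  hence "heisenberg_pair L q x1 x2"
    using pair central L.br_ev_self_zero[OF c2 pair(2)] by unfold_locales simp_all
  thus ?thesis by (rule that)
qed

lemma capable_isomorphic_Heis3_Aab:
  assumes c2: "(2::'f) \<noteq> 0" and c3: "(3::'f) \<noteq> 0" and fin: "fin_dim L" and nil: "nilpotent L"
    and dim: "dim_ev L (derived L) + dim_od L (derived L) = 1"
  obtains q where "q < 2" "isomorphic L (dsum (Heis3 q)
    (Aab (L.V.dim (ev L) - (if q = 0 then 3 else 1)) (L.V.dim (od L) - (if q = 0 then 0 else 2))))"
proof -
  obtain q x1 x2 where pair: "heisenberg_pair L q x1 x2"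
    by (rule capable_heisenberg_pair[OF c2 c3 fin nil dim])
  then obtain a b where "isomorphic L (dsum (Heis3 q) (Aab a b))"
    "L.V.dim (ev L) = (if q = 0 then 3 else 1) + a" "L.V.dim (od L) = (if q = 0 then 0 else 2) + b"
    by (rule heisenberg_pair.normal_form[OF _ fin])
  thus ?thesis using that heisenberg_pair.q[OF pair] by simp
qed

end

text \<open>The cover of \<open>Heis3 q \<oplus> A(a|b)\<close> has basis \<open>e\<^sub>0, \<dots>, e\<^bsub>3+2(a+b)\<^esub>\<close>, and its only nonzero
  brackets are \<open>[e\<^sub>0, e\<^sub>s] = e\<^sub>t\<close> for the pairs \<open>(s, t) = (1, 2), (2, 3), (4 + i, 4 + a + b + i)\<close>.
  Its centre is spanned by \<open>e\<^sub>3\<close> and the \<open>e\<^bsub>4+a+b+i\<^esub>\<close>; dividing it out leaves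
  \<open>[e\<^sub>0, e\<^sub>1] = e\<^sub>2\<close> on \<open>e\<^sub>0, e\<^sub>1, e\<^sub>2\<close> and the abelian part \<open>e\<^bsub>4\<^esub>, \<dots>, e\<^bsub>3+a+b\<^esub>\<close>.\<close>

definition cover_odd :: "nat \<Rightarrow> nat \<Rightarrow> nat \<Rightarrow> nat \<Rightarrow> bool" where
  "cover_odd q a b j \<longleftrightarrow> (q \<noteq> 0 \<and> (j = 1 \<or> j = 2 \<or> j = 3)) \<or> (4 + a \<le> j \<and> j < 4 + a + b) \<or>
      (4 + 2*a + b \<le> j \<and> j < 4 + 2*a + 2*b)"

definition cover_target :: "nat \<Rightarrow> nat \<Rightarrow> nat \<Rightarrow> bool" where
  "cover_target a b t \<longleftrightarrow> t = 2 \<or> t = 3 \<or> (4 + a + b \<le> t \<and> t < 4 + 2*a + 2*b)"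

definition cover_source :: "nat \<Rightarrow> nat \<Rightarrow> nat \<Rightarrow> nat" where
  "cover_source a b t = (if t = 2 then 1 else if t = 3 then 2 else t - (a + b))"

definition cover_br :: "nat \<Rightarrow> nat \<Rightarrow> (nat \<Rightarrow> 'f::field) \<Rightarrow> (nat \<Rightarrow> 'f) \<Rightarrow> nat \<Rightarrow> 'f" where
  "cover_br a b p r = (\<lambda>t. if cover_target a b t
     then p 0 * r (cover_source a b t) - r 0 * p (cover_source a b t) else 0)"

definition Cover :: "nat \<Rightarrow> nat \<Rightarrow> nat \<Rightarrow> ('f::field, nat \<Rightarrow> 'f) lsa" where
  "Cover q a b = \<lparr> car = supp_in 0 (4 + 2*a + 2*b),
     ev = {v \<in> supp_in 0 (4 + 2*a + 2*b). \<forall>j. cover_odd q a b j \<longrightarrow> v j = 0},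
     od = {v \<in> supp_in 0 (4 + 2*a + 2*b). \<forall>j. \<not> cover_odd q a b j \<longrightarrow> v j = 0},
     sm = fsm, br = cover_br a b \<rparr>"

definition cover_proj :: "nat \<Rightarrow> nat \<Rightarrow> (nat \<Rightarrow> 'f::field) \<Rightarrow> (nat \<Rightarrow> 'f) \<times> (nat \<Rightarrow> 'f)" where
  "cover_proj a b p = ((\<lambda>j. if j < 3 then p j else 0), (\<lambda>i. if i < a + b then p (4 + i) else 0))"

lemma cover_source:
  assumes "cover_target a b t"
  shows "cover_source a b t \<noteq> 0" "cover_source a b t < 4 + 2*a + 2*b"
    "cover_odd q a b (cover_source a b t) \<longleftrightarrow> cover_odd q a b t"
    "cover_source a b t = 1 \<or> cover_source a b t = 2 \<or> 4 \<le> cover_source a b t \<and> cover_source a b t < 4 + a + b"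
  using assms unfolding cover_target_def cover_source_def cover_odd_def by auto

lemma not_cover_target_0: "\<not> cover_target a b 0"
  by (simp add: cover_target_def)

lemma not_cover_odd_0: "\<not> cover_odd q a b 0"
  by (simp add: cover_odd_def)

lemma Cover_simps:
  "car (Cover q a b) = supp_in 0 (4 + 2*a + 2*b)"
  "ev (Cover q a b) = {v \<in> supp_in 0 (4 + 2*a + 2*b). \<forall>j. cover_odd q a b j \<longrightarrow> v j = 0}"
  "od (Cover q a b) = {v \<in> supp_in 0 (4 + 2*a + 2*b). \<forall>j. \<not> cover_odd q a b j \<longrightarrow> v j = 0}"
  "sm (Cover q a b) = fsm" "br (Cover q a b) = cover_br a b"
  by (simp_all add: Cover_def)

lemma part_Cover:
  "i < 2 \<Longrightarrow> part (Cover q a b) i =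
     {v \<in> supp_in 0 (4 + 2*a + 2*b). \<forall>j. cover_odd q a b j \<noteq> (i = 1) \<longrightarrow> v j = 0}"
  by (cases i) (auto simp: part_def Cover_simps)

lemma part_CoverD:
  "i < 2 \<Longrightarrow> x \<in> part (Cover q a b) i \<Longrightarrow> cover_odd q a b j \<noteq> (i = 1) \<Longrightarrow> x j = 0"
  by (subst (asm) part_Cover) auto

lemma vector_space_fsm: "vector_space (fsm :: 'f::field \<Rightarrow> (nat \<Rightarrow> 'f) \<Rightarrow> _)"
  by unfold_locales (auto simp: fsm_def fun_eq_iff algebra_simps)

lemma subspace_fsm: "module.subspace (fsm :: 'f::field \<Rightarrow> (nat \<Rightarrow> 'f) \<Rightarrow> _) S \<longleftrightarrow>
   0 \<in> S \<and> (\<forall>x\<in>S. \<forall>y\<in>S. x + y \<in> S) \<and> (\<forall>c. \<forall>x\<in>S. fsm c x \<in> S)"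
  by (rule module.subspace_def[OF vector_space_fsm[folded module_iff_vector_space]])

lemma cover_br_supp: "cover_br a b x y \<in> supp_in 0 (4 + 2*a + 2*b)"
  by (auto simp: supp_in_iff cover_br_def cover_target_def)

lemma cover_br_part:
  assumes ij: "i < 2" "j < 2" and x: "x \<in> part (Cover q a b) i" and y: "y \<in> part (Cover q a b) j"
  shows "cover_br a b x y \<in> part (Cover q a b) ((i + j) mod 2)"
proof -
  have x': "x t = 0" if "cover_odd q a b t \<noteq> (i = 1)" for t using part_CoverD ij(1) x that by blast
  have y': "y t = 0" if "cover_odd q a b t \<noteq> (j = 1)" for t using part_CoverD ij(2) y that by blast
  have m2: "(i + j) mod 2 < 2" by simp
  show ?thesis unfolding part_Cover[OF m2]
  proof (intro CollectI conjI allI impI cover_br_supp)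
    fix t assume t: "cover_odd q a b t \<noteq> ((i + j) mod 2 = 1)"
    show "cover_br a b x y t = 0"
    proof (cases "cover_target a b t")
      case True
      note s = cover_source(1)[OF True] cover_source(3)[OF True, of q]
      have P1: "x 0 * y (cover_source a b t) = 0"
        using x'[of 0] y'[of "cover_source a b t"] not_cover_odd_0 s t ij
        by (cases "i = 1") (auto simp: less_2_cases_iff)
      have P2: "y 0 * x (cover_source a b t) = 0"
        using y'[of 0] x'[of "cover_source a b t"] not_cover_odd_0 s t ij
        by (cases "j = 1") (auto simp: less_2_cases_iff)
      show ?thesis by (simp only: cover_br_def True if_True P1 P2 diff_zero)
    qed (simp add: cover_br_def)
  qed
qed

lemma cover_br_skew:
  assumes ij: "i < 2" "j < 2" and x: "x \<in> part (Cover q a b) i" and y: "y \<in> part (Cover q a b) j"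
  shows "cover_br a b x y = - sgnmul i j (cover_br a b y x)"
proof (cases "odd (i * j)")
  case True
  hence "i = 1" "j = 1" using ij by (auto simp: less_2_cases_iff)
  hence "x 0 = 0" "y 0 = 0" using part_CoverD ij x y not_cover_odd_0 by blast+
  thus ?thesis using True by (simp add: sgnmul_def cover_br_def fun_eq_iff)
qed (simp add: sgnmul_def cover_br_def fun_eq_iff)

lemma cover_br_jacobi:
  assumes ij: "i < 2" "j < 2" and x: "x \<in> part (Cover q a b) i" and y: "y \<in> part (Cover q a b) j"
  shows "cover_br a b x (cover_br a b y z) =
    cover_br a b (cover_br a b x y) z + sgnmul i j (cover_br a b y (cover_br a b x z))"
proof (cases "odd (i * j)")
  case True
  hence "i = 1" "j = 1" using ij by (auto simp: less_2_cases_iff)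
  hence "x 0 = 0" "y 0 = 0" using part_CoverD ij x y not_cover_odd_0 by blast+
  thus ?thesis using True not_cover_target_0 by (simp add: sgnmul_def cover_br_def fun_eq_iff)
qed (use not_cover_target_0 in \<open>simp add: sgnmul_def cover_br_def fun_eq_iff algebra_simps\<close>)

lemma is_lsa_Cover: "is_lsa (Cover q a b :: ('f::field, nat \<Rightarrow> 'f) lsa)"
  unfolding is_lsa_def
proof (intro conjI ballI allI impI)
  show "vector_space (sm (Cover q a b :: ('f, nat \<Rightarrow> 'f) lsa))"
    by (simp add: Cover_simps vector_space_fsm)
  show "module.subspace (sm (Cover q a b :: ('f, nat \<Rightarrow> 'f) lsa)) (ev (Cover q a b))"
    "module.subspace (sm (Cover q a b :: ('f, nat \<Rightarrow> 'f) lsa)) (od (Cover q a b))"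
    by (simp_all add: Cover_simps subspace_fsm) (auto simp: supp_in_iff fsm_def)
  show "ev (Cover q a b :: ('f, nat \<Rightarrow> 'f) lsa) \<inter> od (Cover q a b) = {0}"
    by (auto simp: Cover_simps supp_in_iff fun_eq_iff) metis
  show "car (Cover q a b :: ('f, nat \<Rightarrow> 'f) lsa) = {x + y |x y. x \<in> ev (Cover q a b) \<and> y \<in> od (Cover q a b)}"
  proof (intro set_eqI iffI)
    fix x :: "nat \<Rightarrow> 'f" assume x: "x \<in> car (Cover q a b)"
    have "x = (\<lambda>j. if cover_odd q a b j then 0 else x j) + (\<lambda>j. if cover_odd q a b j then x j else 0)"
      by (auto simp: fun_eq_iff)
    moreover have "(\<lambda>j. if cover_odd q a b j then 0 else x j) \<in> ev (Cover q a b)"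
      "(\<lambda>j. if cover_odd q a b j then x j else 0) \<in> od (Cover q a b)"
      using x by (auto simp: Cover_simps supp_in_iff)
    ultimately show "x \<in> {x + y |x y. x \<in> ev (Cover q a b) \<and> y \<in> od (Cover q a b)}" by blast
  qed (auto simp: Cover_simps supp_in_iff)
  fix i j k :: nat and x y z :: "nat \<Rightarrow> 'f" and c :: 'f
  show "br (Cover q a b) x y \<in> car (Cover q a b)" by (simp add: Cover_simps cover_br_supp)
  show "br (Cover q a b) (x + y) z = br (Cover q a b) x z + br (Cover q a b) y z"
    "br (Cover q a b) z (x + y) = br (Cover q a b) z x + br (Cover q a b) z y"
    "br (Cover q a b) (sm (Cover q a b) c x) y = sm (Cover q a b) c (br (Cover q a b) x y)"
    "br (Cover q a b) x (sm (Cover q a b) c y) = sm (Cover q a b) c (br (Cover q a b) x y)"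
    by (auto simp: Cover_simps cover_br_def fun_eq_iff algebra_simps fsm_def)
  assume ij: "i < 2" "j < 2" and x: "x \<in> part (Cover q a b) i" and y: "y \<in> part (Cover q a b) j"
  show "br (Cover q a b) x y \<in> part (Cover q a b) ((i + j) mod 2)"
    unfolding Cover_simps(5) by (rule cover_br_part[OF ij x y])
  show "br (Cover q a b) x y = - sgnmul i j (br (Cover q a b) y x)"
    unfolding Cover_simps(5) by (rule cover_br_skew[OF ij x y])
  show "br (Cover q a b) x (br (Cover q a b) y z) =
      br (Cover q a b) (br (Cover q a b) x y) z + sgnmul i j (br (Cover q a b) y (br (Cover q a b) x z))"
    unfolding Cover_simps(5) by (rule cover_br_jacobi[OF ij x y])
qed

lemma cover_proj_hom:
  "lsa_hom (Cover q a b) (dsum (Heis3 q) (Aab a b) :: ('f::field, _) lsa) (cover_proj a b)"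
  unfolding lsa_hom_def image_subset_iff
proof (intro conjI ballI allI)
  have lt3: "(j::nat) < 3 \<Longrightarrow> j = 0 \<or> j = 1 \<or> j = 2" for j by auto
  fix x y :: "nat \<Rightarrow> 'f" and c :: 'f
  show "cover_proj a b x \<in> car (dsum (Heis3 q) (Aab a b))"
    by (auto simp: Heis3_Aab_simps cover_proj_def supp_in_iff)
  show "cover_proj a b (x + y) = cover_proj a b x + cover_proj a b y"
    by (auto simp: cover_proj_def fun_eq_iff)
  show "cover_proj a b (sm (Cover q a b) c x) = sm (dsum (Heis3 q) (Aab a b)) c (cover_proj a b x)"
    by (auto simp: Heis3_Aab_simps cover_proj_def fun_eq_iff Cover_simps fsm_def)
  show "cover_proj a b (br (Cover q a b) x y) = br (dsum (Heis3 q) (Aab a b)) (cover_proj a b x) (cover_proj a b y)"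
    by (auto simp: Heis3_Aab_simps cover_proj_def fun_eq_iff Cover_simps cover_br_def heis_br_def
      cover_target_def cover_source_def)
  show "x \<in> ev (Cover q a b) \<Longrightarrow> cover_proj a b x \<in> ev (dsum (Heis3 q) (Aab a b))"
    "x \<in> od (Cover q a b) \<Longrightarrow> cover_proj a b x \<in> od (dsum (Heis3 q) (Aab a b))"
    by (auto simp: Heis3_Aab_simps cover_proj_def Cover_simps supp_in_iff cover_odd_def dest!: lt3)
qed

lemma cover_proj_onto:
  "cover_proj a b ` car (Cover q a b) = car (dsum (Heis3 q) (Aab a b) :: ('f::field, _) lsa)"
proof
  show "cover_proj a b ` car (Cover q a b) \<subseteq> car (dsum (Heis3 q) (Aab a b) :: ('f, _) lsa)"
    by (auto simp: Heis3_Aab_simps cover_proj_def supp_in_iff)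
next
  show "car (dsum (Heis3 q) (Aab a b)) \<subseteq> cover_proj a b ` car (Cover q a b :: ('f, _) lsa)"
  proof
    fix p :: "(nat \<Rightarrow> 'f) \<times> (nat \<Rightarrow> 'f)" assume p: "p \<in> car (dsum (Heis3 q) (Aab a b))"
    define x where "x j = (if j < 3 then fst p j else if 4 \<le> j \<and> j < 4 + a + b then snd p (j - 4) else 0)" for j
    have "x \<in> car (Cover q a b)" unfolding x_def by (auto simp: Cover_simps supp_in_iff)
    moreover have "cover_proj a b x = p" using p unfolding x_def cover_proj_def
      by (auto simp: Heis3_Aab_simps fun_eq_iff supp_in_iff prod_eq_iff)
    ultimately show "p \<in> cover_proj a b ` car (Cover q a b)" by force
  qed
qed

lemma cover_proj_kernel:
  "{x \<in> car (Cover q a b). cover_proj a b x = (0 :: (nat \<Rightarrow> 'f::field) \<times> _)} = center (Cover q a b)"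
proof (intro set_eqI iffI)
  fix x :: "nat \<Rightarrow> 'f" assume x: "x \<in> {x \<in> car (Cover q a b). cover_proj a b x = 0}"
  have low: "\<forall>j. (if j < 3 then x j else 0) = 0" and high: "\<forall>i. (if i < a + b then x (4 + i) else 0) = 0"
    using x by (simp_all add: cover_proj_def zero_prod_def fun_eq_iff)
  have low': "x j = 0" if "j < 3" for j using low that by (metis (full_types))
  have high': "x (4 + i) = 0" if "i < a + b" for i using high that by (metis (full_types))
  have "x (cover_source a b t) = 0" if t: "cover_target a b t" for t
  proof -
    consider "cover_source a b t < 3" | "cover_source a b t = 4 + (cover_source a b t - 4)" "cover_source a b t - 4 < a + b"
      using cover_source(4)[OF t] by linarith
    thus ?thesis using low' high' by cases metis+
  qed
  thus "x \<in> center (Cover q a b)"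
    using x low'[of 0] unfolding center_def by (auto simp: Cover_simps cover_br_def fun_eq_iff)
next
  fix x :: "nat \<Rightarrow> 'f" assume x: "x \<in> center (Cover q a b)"
  have e: "(\<lambda>j. if j = k then 1 else 0 :: 'f) \<in> car (Cover q a b)" if "k < 4" for k
    using that by (auto simp: Cover_simps supp_in_iff)
  have "cover_br a b x (\<lambda>j. if j = 1 then 1 else 0) 2 = 0"
    using x e[of 1] unfolding center_def by (simp add: Cover_simps)
  hence x0: "x 0 = 0" by (simp add: cover_br_def cover_target_def cover_source_def)
  have source_zero: "x (cover_source a b t) = 0" if t: "cover_target a b t" for t
  proof -
    have "cover_br a b x (\<lambda>j. if j = 0 then 1 else 0) t = 0"
      using x e[of 0] unfolding center_def by (simp add: Cover_simps)
    thus ?thesis using t cover_source(1)[OF t] by (simp add: cover_br_def)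
  qed
  have "x 1 = 0" "x 2 = 0" using source_zero[of 2] source_zero[of 3] by (simp_all add: cover_target_def cover_source_def)
  moreover have "x (4 + i) = 0" if "i < a + b" for i
    using source_zero[of "4 + a + b + i"] that by (simp add: cover_target_def cover_source_def)
  ultimately have "cover_proj a b x = 0" using x0 unfolding cover_proj_def
    by (auto simp: fun_eq_iff zero_prod_def less_Suc_eq numeral_3_eq_3 numeral_2_eq_2)
  thus "x \<in> {x \<in> car (Cover q a b). cover_proj a b x = 0}" using x unfolding center_def by blast
qed

lemma central_quot_Cover:
  "central_quot (Cover q a b) (dsum (Heis3 q) (Aab a b) :: ('f::field, _) lsa) (cover_proj a b)"
  unfolding central_quot_def using is_lsa_Cover cover_proj_hom cover_proj_onto cover_proj_kernel by blast

lemma capable_wrt_isomorphic: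
  fixes T :: "'h::ab_group_add itself" and L :: "('f::field, 'v::ab_group_add) lsa"
  assumes L: "is_lsa L" and M: "graded_carrier M" and iso: "isomorphic L M" and cap: "capable_wrt T M"
  shows "capable_wrt T L"
proof -
  interpret L: lie_superalgebra L using L by (simp add: lie_superalgebra_def)
  obtain \<phi> where \<phi>: "lsa_hom L M \<phi>" "bij_betw \<phi> (car L) (car M)"
    using iso unfolding isomorphic_def lsa_iso_def by blast
  define \<psi> where "\<psi> = inv_into (car L) \<phi>"
  have \<psi>: "lsa_hom M L \<psi>" "bij_betw \<psi> (car M) (car L)"
    using lsa_iso_inv_into[OF \<phi> L.graded M] unfolding lsa_iso_def \<psi>_def by blast+
  obtain H :: "('f, 'h) lsa" and \<pi> where "central_quot H M \<pi>" using cap unfolding capable_wrt_def by blast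
  hence H: "is_lsa H" "lsa_hom H M \<pi>" "\<pi> ` car H = car M" "{x \<in> car H. \<pi> x = 0} = center H"
    unfolding central_quot_def by blast+
  have "(\<psi> \<circ> \<pi>) ` car H = \<psi> ` (\<pi> ` car H)" by (rule image_comp[symmetric])
  hence "(\<psi> \<circ> \<pi>) ` car H = car L" using H(3) \<psi>(2) by (simp add: bij_betw_def)
  moreover have "\<psi> (\<pi> x) = 0 \<longleftrightarrow> \<pi> x = 0" if "x \<in> car H" for x
    using \<psi> lsa_hom_zero[OF \<psi>(1) M] graded_carrier_zero[OF M] H(3) that
    by (metis bij_betw_def image_eqI inj_onD)
  hence "{x \<in> car H. (\<psi> \<circ> \<pi>) x = 0} = center H" using H(4) by auto
  ultimately have "central_quot H L (\<psi> \<circ> \<pi>)"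
    unfolding central_quot_def using H lsa_hom_comp[OF H(2) \<psi>(1)] by auto
  thus ?thesis unfolding capable_wrt_def by blast
qed

lemma capable_Heis3_Aab: "capable_wrt TYPE(nat \<Rightarrow> 'f) (dsum (Heis3 q) (Aab a b) :: ('f::field, _) lsa)"
  unfolding capable_wrt_def using central_quot_Cover by blast

theorem mainTheorem1:
  fixes L :: "('f::field, 'v::ab_group_add) lsa" and k l :: nat
  assumes char2: "(2::'f) \<noteq> 0" and char3: "(3::'f) \<noteq> 0"
    and lsa: "is_lsa L" and fin: "fin_dim L" and nil: "nilpotent L"
    and dimL: "dim_ev L (car L) = k" "dim_od L (car L) = l"
    and dimL': "dim_ev L (derived L) + dim_od L (derived L) = 1"
  shows "(capable_wrt TYPE('h::ab_group_add) L \<longrightarrow>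
            (isomorphic L (dsum (Heis 1 0 :: ('f, nat \<Rightarrow> 'f) lsa) (Aab (k - 3) l)) \<or>
             isomorphic L (dsum (Hodd 1 :: ('f, nat \<Rightarrow> 'f) lsa) (Aab (k - 1) (l - 2)))))
       \<and> ((isomorphic L (dsum (Heis 1 0 :: ('f, nat \<Rightarrow> 'f) lsa) (Aab (k - 3) l)) \<or>
             isomorphic L (dsum (Hodd 1 :: ('f, nat \<Rightarrow> 'f) lsa) (Aab (k - 1) (l - 2))))
            \<longrightarrow> capable_wrt TYPE(nat \<Rightarrow> 'f) L)"
proof -
  interpret lie_superalgebra L using lsa by (simp add: lie_superalgebra_def)
  have dims: "V.dim (ev L) = k" "V.dim (od L) = l"
    using dimL ev_car od_car unfolding dim_ev_def dim_od_def by (simp_all add: Int_absorb1 subsetI)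
  show ?thesis
  proof (intro conjI impI)
    assume "capable_wrt TYPE('h) L"
    then obtain H :: "('f, 'h) lsa" and f where "central_quotient L H f"
      using lsa unfolding capable_wrt_def central_quotient_def central_quotient_axioms_def
        lie_superalgebra_def by blast
    then obtain q where "q < 2" and "isomorphic L (dsum (Heis3 q)
        (Aab (k - (if q = 0 then 3 else 1)) (l - (if q = 0 then 0 else 2))))"
      by (rule central_quotient.capable_isomorphic_Heis3_Aab[OF _ char2 char3 fin nil dimL', unfolded dims])
    thus "isomorphic L (dsum (Heis 1 0) (Aab (k - 3) l)) \<or> isomorphic L (dsum (Hodd 1) (Aab (k - 1) (l - 2)))"
      by (cases "q = 0") (simp_all add: Heis3_def)
  next
    assume "isomorphic L (dsum (Heis 1 0) (Aab (k - 3) l)) \<or> isomorphic L (dsum (Hodd 1) (Aab (k - 1) (l - 2)))"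
    then obtain q a b where "isomorphic L (dsum (Heis3 q :: ('f, nat \<Rightarrow> 'f) lsa) (Aab a b))"
      by (metis Heis3_def One_nat_def zero_neq_one)
    thus "capable_wrt TYPE(nat \<Rightarrow> 'f) L"
      using capable_wrt_isomorphic[OF lsa graded_carrier_Heis3_Aab _ capable_Heis3_Aab] by blast
  qed
qed

end
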